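(* Let $m\in\mathbb{N}$, $A=\langle a\rangle\le\mathrm{Sym}(3)$ with $a=(1\,2\,3)$, $B=(\mathbb{Z}/3\mathbb{Z})^m$, and let $\omega=\omega_0\omega_1\omega_2\dots$ be a sequence of epimorphisms $\omega_i\colon B\to A$ with $\bigcap_{i\ge k}\ker(\omega_i)=\{1\}$ for every $k\in\mathbb{N}$. Let $l\in\mathbb{N}$ be the smallest integer such that $\bigcap_{i=0}^{l}\ker(\omega_i)=\{1\}$. Then there exists a constant $C_l\in\mathbb{N}$ such that $|\mathcal{I}_\infty^\omega(n)|\le C_l\, n^{\frac{3^{l+2}-1}{2}}$ for all integers $n\ge 1$.
   Context: $T_3$ is the $3$-regular rooted tree; elements of $\mathrm{Sym}(3)$ act as rooted automorphisms $\tau(xw)=\tau(x)w$; for $g$ fixing the first level, $g=(g_1,g_2,g_3)$ lists the restrictions of $g$ to the three subtrees below the root, and every $g\in\mathrm{Aut}(T_3)$ is uniquely $g=(g_1,g_2,g_3)\tau$ with $\tau\in\mathrm{Sym}(3)$. Let $\sigma$ be the left shift on sequences. Define recursively $\beta_\omega\colon B\to\mathrm{Aut}(T_3)$ by $\beta_\omega(b)=(\omega_0(b),1,\beta_{\sigma(\omega)}(b))$, let $B_\omega=\beta_\omega(B)$ and $G_\omega=\langle A,B_\omega\rangle$. Equip $G_\omega$ with the word pseudonorm $|\cdot|_\omega$: $|g|_\omega$ is the minimum of $\sum_i|s_i|$ over all expressions $g=s_1\cdots s_k$ with $s_i\in A\cup B_\omega$, where elements of $A$ have length $0$ and nontrivial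 elements of $B_\omega$ have length $1$. Every $g\in G_{\sigma^\nu(\omega)}$ can be written $g=(g_1,g_2,g_3)\tau$ with $g_i\in G_{\sigma^{\nu+1}(\omega)}$, $\tau\in A$. Incompressible elements: set $\mathcal{I}_0^{\sigma^\nu(\omega)}=G_{\sigma^\nu(\omega)}$ and recursively $\mathcal{I}_k^{\sigma^\nu(\omega)}$ is the set of $g=(g_1,g_2,g_3)\tau\in G_{\sigma^\nu(\omega)}$ with $g_1,g_2,g_3\in\mathcal{I}_{k-1}^{\sigma^{\nu+1}(\omega)}$ and $\sum_{i=1}^3|g_i|_{\sigma^{\nu+1}(\omega)}=|g|_{\sigma^\nu(\omega)}$; then $\mathcal{I}_\infty^\omega=\bigcap_{k\ge1}\mathcal{I}_k^\omega$, and $\mathcal{I}_\infty^\omega(n)$ is the set of elements of $\mathcal{I}_\infty^\omega$ of length $|\cdot|_\omega$ equal to $n$. *)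

theory Defs
  imports Main
begin

(* Vertices of the 3-regular rooted tree T_3: words over the alphabet {0,1,2}
   (the paper's letters 1,2,3 are relabelled 0,1,2).  Automorphisms are
   represented as functions on words (letters >= 3 are fixed, irrelevant). *)

(* A = <a>, a = (1 2 3), realised on {0,1,2} as x |-> x+1 mod 3 *)
definition rot :: "nat \<Rightarrow> nat \<Rightarrow> nat" where
  "rot k x = (if x < 3 then (x + k) mod 3 else x)"

definition A_set :: "(nat \<Rightarrow> nat) set" where
  "A_set = {rot 0, rot 1, rot 2}"

definition B_set :: "nat \<Rightarrow> (nat \<Rightarrow> nat) set" where
  "B_set m = {b. \<forall>i. b i < 3 \<and> (m \<le> i \<longrightarrow> b i = 0)}"

definition badd :: "(nat \<Rightarrow> nat) \<Rightarrow> (nat \<Rightarrow> nat) \<Rightarrow> (nat \<Rightarrow> nat)" where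
  "badd b c = (\<lambda>i. (b i + c i) mod 3)"

definition bzero :: "nat \<Rightarrow> nat" where
  "bzero = (\<lambda>_. 0)"

definition epi :: "nat \<Rightarrow> ((nat \<Rightarrow> nat) \<Rightarrow> (nat \<Rightarrow> nat)) \<Rightarrow> bool" where
  "epi m f \<longleftrightarrow> (\<forall>b\<in>B_set m. \<forall>c\<in>B_set m. f (badd b c) = f b \<circ> f c)
                 \<and> f ` B_set m = A_set"

definition kern :: "nat \<Rightarrow> ((nat \<Rightarrow> nat) \<Rightarrow> (nat \<Rightarrow> nat)) \<Rightarrow> (nat \<Rightarrow> nat) set" where
  "kern m f = {b \<in> B_set m. f b = id}"

definition shift :: "(nat \<Rightarrow> 'a) \<Rightarrow> nat \<Rightarrow> 'a" where
  "shift \<omega> = (\<lambda>i. \<omega> (Suc i))"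

fun rooted :: "(nat \<Rightarrow> nat) \<Rightarrow> nat list \<Rightarrow> nat list" where
  "rooted \<tau> [] = []"
| "rooted \<tau> (y # w) = \<tau> y # w"

fun beta :: "(nat \<Rightarrow> (nat \<Rightarrow> nat) \<Rightarrow> (nat \<Rightarrow> nat)) \<Rightarrow> (nat \<Rightarrow> nat) \<Rightarrow> nat list \<Rightarrow> nat list" where
  "beta \<omega> b [] = []"
| "beta \<omega> b (x # w) =
     (if x = 0 then 0 # rooted (\<omega> 0 b) w
      else if x = 1 then 1 # w
      else if x = 2 then 2 # beta (shift \<omega>) b w
      else x # w)"

definition B_om :: "nat \<Rightarrow> (nat \<Rightarrow> (nat \<Rightarrow> nat) \<Rightarrow> (nat \<Rightarrow> nat)) \<Rightarrow> (nat list \<Rightarrow> nat list) set" where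
  "B_om m \<omega> = beta \<omega> ` B_set m"

definition gens :: "nat \<Rightarrow> (nat \<Rightarrow> (nat \<Rightarrow> nat) \<Rightarrow> (nat \<Rightarrow> nat)) \<Rightarrow> (nat list \<Rightarrow> nat list) set" where
  "gens m \<omega> = rooted ` A_set \<union> B_om m \<omega>"

definition gweight :: "(nat list \<Rightarrow> nat list) \<Rightarrow> nat" where
  "gweight s = (if s \<in> rooted ` A_set then 0 else 1)"

definition G_om :: "nat \<Rightarrow> (nat \<Rightarrow> (nat \<Rightarrow> nat) \<Rightarrow> (nat \<Rightarrow> nat)) \<Rightarrow> (nat list \<Rightarrow> nat list) set" where
  "G_om m \<omega> = {foldr (\<circ>) ss id | ss. set ss \<subseteq> gens m \<omega>}"

definition wlen :: "nat \<Rightarrow> (nat \<Rightarrow> (nat \<Rightarrow> nat) \<Rightarrow> (nat \<Rightarrow> nat)) \<Rightarrow> (nat list \<Rightarrow> nat list) \<Rightarrow> nat" where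
  "wlen m \<omega> g = (LEAST n. \<exists>ss. set ss \<subseteq> gens m \<omega> \<and> foldr (\<circ>) ss id = g
                               \<and> sum_list (map gweight ss) = n)"

definition sec :: "(nat list \<Rightarrow> nat list) \<Rightarrow> nat \<Rightarrow> nat list \<Rightarrow> nat list" where
  "sec g x = (\<lambda>w. tl (g (x # w)))"

fun Inc :: "nat \<Rightarrow> nat \<Rightarrow> (nat \<Rightarrow> (nat \<Rightarrow> nat) \<Rightarrow> (nat \<Rightarrow> nat)) \<Rightarrow> (nat list \<Rightarrow> nat list) set" where
  "Inc m 0 \<omega> = G_om m \<omega>"
| "Inc m (Suc k) \<omega> =
     {g \<in> G_om m \<omega>. (\<forall>x<3. sec g x \<in> Inc m k (shift \<omega>))
        \<and> (\<Sum>x<3. wlen m (shift \<omega>) (sec g x)) = wlen m \<omega> g}"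

definition Inc_inf :: "nat \<Rightarrow> (nat \<Rightarrow> (nat \<Rightarrow> nat) \<Rightarrow> (nat \<Rightarrow> nat)) \<Rightarrow> (nat list \<Rightarrow> nat list) set" where
  "Inc_inf m \<omega> = (\<Inter>k\<in>{1..}. Inc m k \<omega>)"

definition Inc_inf_n :: "nat \<Rightarrow> (nat \<Rightarrow> (nat \<Rightarrow> nat) \<Rightarrow> (nat \<Rightarrow> nat)) \<Rightarrow> nat \<Rightarrow> (nat list \<Rightarrow> nat list) set" where
  "Inc_inf_n m \<omega> n = {g \<in> Inc_inf m \<omega>. wlen m \<omega> g = n}"

end

theory Submission
  imports Defs
begin

text \<open>An incompressible element \<open>g\<close> of length \<open>n\<close> is represented by a word of minimal weight
  in the rotations and the generators \<open>\<beta>\<^sub>\<omega>(b)\<close>; after normalisation the word alternates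
  rotations with \<open>n\<close> nontrivial generators.  Incompressibility makes this word, and recursively
  its sections, reduced: no two generators are separated by rotations of total \<open>0\<close>.  For a
  reduced word with reduced sections the offsets of the generators (the rotation to their right)
  first rise and then fall by one modulo 3, which leaves \<open>3(n + 1)\<close> possibilities; they
  determine the shapes of the three sections, in which at most four rotations are not determined.
  So the words obtained by erasing the generators in the sections at the
  \<open>(3 ^ (l + 2) - 1) div 2\<close> vertices of the first \<open>l + 2\<close> levels form a tree of data with at
  most \<open>243(n + 1)\<close> choices per vertex.  This tree determines \<open>\<omega>\<^sub>0(b), \<dots>, \<omega>\<^sub>l(b)\<close> for
  every generator \<open>b\<close> of the word, hence \<open>b\<close>, since \<open>ker \<omega>\<^sub>0 \<inter> \<dots> \<inter> ker \<omega>\<^sub>l\<close> is trivial,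
  and therefore \<open>g\<close>.\<close>

type_synonym epi_seq = "nat \<Rightarrow> (nat \<Rightarrow> nat) \<Rightarrow> (nat \<Rightarrow> nat)"

lemma less3_cases: "(n::nat) < 3 \<Longrightarrow> n = 0 \<or> n = 1 \<or> n = 2" by presburger

lemma mod3_shift_surj:
  fixes y t :: nat
  assumes "y < 3"
  shows "\<exists>x<3. (x + t) mod 3 = y"
  using assms by (intro exI[of _ "(y + 2 * t) mod 3"]) presburger

lemma mod3_add_neq: "(a::nat) mod 3 \<noteq> 0 \<Longrightarrow> (a + b) mod 3 \<noteq> b mod 3"
  by presburger

lemma mod3_add_cancel:
  fixes a a' u u' :: nat
  assumes "a < 3" "a' < 3" "(a + u) mod 3 = (a' + u') mod 3" "u mod 3 = u' mod 3"
  shows "a = a'"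
proof -
  define r where "r = u mod 3"
  have "(a + r) mod 3 = (a' + r) mod 3"
    using assms(3,4) unfolding r_def by (metis mod_add_right_eq)
  moreover have "r < 3" unfolding r_def by simp
  ultimately show ?thesis using assms(1,2) by (auto dest!: less3_cases)
qed

lemma mod3_add_mod_add: "(x + (t + k) mod 3) mod 3 = ((x + t) mod 3 + k) mod (3::nat)"
  by presburger

lemma sum_lessThan_3: "(\<Sum>x<3. f x) = f 0 + f 1 + f (2::nat)"
proof -
  have "{..<3::nat} = {0, 1, 2}" by auto
  then show ?thesis by (simp add: add.assoc)
qed

lemma rot_comp: "rot i \<circ> rot j = rot (i + j)"
proof (rule ext)
  fix x
  have "(i + (x + j) mod 3) mod 3 = (i + (x + j)) mod 3" by (rule mod_add_right_eq)
  then show "(rot i \<circ> rot j) x = rot (i + j) x" by (simp add: rot_def algebra_simps)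
qed

lemma rot_mod: "rot (a mod 3) = rot a"
  by (rule ext) (simp add: rot_def mod_add_right_eq)

lemma rot0: "rot 0 = id"
  by (rule ext) (simp add: rot_def)

lemma rot_eq_iff: "rot i = rot j \<longleftrightarrow> i mod 3 = j mod 3"
proof
  assume "rot i = rot j" then have "rot i 0 = rot j 0" by simp
  then show "i mod 3 = j mod 3" by (simp add: rot_def)
next
  assume "i mod 3 = j mod 3" then show "rot i = rot j" by (metis rot_mod)
qed

lemma rooted_comp: "rooted (f \<circ> g) = rooted f \<circ> rooted g"
proof (rule ext)
  fix w show "rooted (f \<circ> g) w = (rooted f \<circ> rooted g) w" by (cases w) auto
qed

lemma rooted_id: "rooted id = id"
proof (rule ext)
  fix w show "rooted id w = id w" by (cases w) auto
qed

lemma rooted_last: "length xs \<ge> 2 \<Longrightarrow> last (rooted \<tau> xs) = last xs"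
  by (cases xs) auto

lemma rooted_rot_in_A: "rooted (rot a) \<in> rooted ` A_set"
proof -
  have "a mod 3 = 0 \<or> a mod 3 = 1 \<or> a mod 3 = 2" by presburger
  then have "rot (a mod 3) \<in> A_set" unfolding A_set_def by auto
  then show ?thesis using rot_mod by (metis image_eqI)
qed

lemma id_in_A: "id \<in> rooted ` A_set"
  using rooted_rot_in_A[of 0] rot0 rooted_id by simp

section \<open>The generators \<open>\<beta>\<^sub>\<omega>(b)\<close>\<close>

lemma epi_rot:
  assumes "epi m f" "b \<in> B_set m"
  shows "\<exists>k<3. f b = rot k"
proof -
  have "f b \<in> A_set" using assms unfolding epi_def by blast
  then show ?thesis unfolding A_set_def by force
qed

definition rot_index :: "((nat \<Rightarrow> nat) \<Rightarrow> (nat \<Rightarrow> nat)) \<Rightarrow> (nat \<Rightarrow> nat) \<Rightarrow> nat"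
  where
  "rot_index f b = (SOME k. k < 3 \<and> f b = rot k)"

lemma rot_index:
  assumes "epi m f" "b \<in> B_set m"
  shows "rot_index f b < 3" and "f b = rot (rot_index f b)"
proof -
  have "\<exists>k. k<3 \<and> f b = rot k" using epi_rot[OF assms] by blast
  from someI_ex[OF this] show "rot_index f b < 3" "f b = rot (rot_index f b)"
    unfolding rot_index_def by auto
qed

lemma bzero_B[simp]: "bzero \<in> B_set m" by (simp add: B_set_def bzero_def)

lemma badd_B: "b \<in> B_set m \<Longrightarrow> c \<in> B_set m \<Longrightarrow> badd b c \<in> B_set m"
  by (simp add: B_set_def badd_def)

lemma epi_hom:
  "epi m f \<Longrightarrow> b \<in> B_set m \<Longrightarrow> c \<in> B_set m \<Longrightarrow> f (badd b c) = f b \<circ> f c"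
  by (simp add: epi_def)

lemma badd_zero: "badd bzero bzero = bzero" by (simp add: badd_def bzero_def)

lemma epi_zero: assumes "epi m f" shows "f bzero = id"
proof -
  obtain k where k: "k < 3" "f bzero = rot k" using epi_rot[OF assms bzero_B] by blast
  have "f bzero = f bzero \<circ> f bzero" using epi_hom[OF assms bzero_B bzero_B] badd_zero by simp
  then have "rot k = rot (k + k)" using k rot_comp by simp
  then have "k mod 3 = (k + k) mod 3" by (simp add: rot_eq_iff)
  moreover have "k = 0 \<or> k = 1 \<or> k = 2" using k(1) by auto
  ultimately have "k = 0" by auto
  then show ?thesis using k rot0 by simp
qed

lemma shift_app: "shift \<omega> i = \<omega> (Suc i)" by (simp add: shift_def)

lemma epis_shift: "\<forall>i. epi m (\<omega> i) \<Longrightarrow> \<forall>i. epi m (shift \<omega> i)"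
  by (simp add: shift_app)

lemma beta_zero: "\<forall>i. epi m (\<omega> i) \<Longrightarrow> beta \<omega> bzero = id"
proof
  fix w
  show "\<forall>i. epi m (\<omega> i) \<Longrightarrow> beta \<omega> bzero w = id w"
  proof (induction w arbitrary: \<omega>)
    case Nil then show ?case by simp
  next
    case (Cons x w)
    have z: "\<omega> 0 bzero = id" using epi_zero Cons.prems by blast
    have "beta (shift \<omega>) bzero w = w" using Cons.IH[OF epis_shift[OF Cons.prems]] by simp
    then show ?case using z rooted_id by simp
  qed
qed

lemma beta_hom:
  assumes "\<forall>i. epi m (\<omega> i)" "b \<in> B_set m" "c \<in> B_set m"
  shows "beta \<omega> (badd b c) = beta \<omega> b \<circ> beta \<omega> c"
proof
  fix w
  show "beta \<omega> (badd b c) w = (beta \<omega> b \<circ> beta \<omega> c) w"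
    using assms(1)
  proof (induction w arbitrary: \<omega>)
    case Nil then show ?case by simp
  next
    case (Cons x w)
    have z: "\<omega> 0 (badd b c) = \<omega> 0 b \<circ> \<omega> 0 c" using epi_hom Cons.prems assms(2,3) by blast
    have "beta (shift \<omega>) (badd b c) w = beta (shift \<omega>) b (beta (shift \<omega>) c w)"
      using Cons.IH[OF epis_shift[OF Cons.prems]] by simp
    then show ?case using z rooted_comp by simp
  qed
qed

lemma beta_path: "beta \<omega> b (replicate i 2 @ [0, y]) = replicate i 2 @ [0, \<omega> i b y]"
proof (induction i arbitrary: \<omega>)
  case 0 then show ?case by simp
next
  case (Suc i) then show ?case by (simp add: shift_app)
qed

lemma beta_not_rooted:
  assumes "\<forall>i. epi m (\<omega> i)" "b \<in> B_set m" "\<omega> i b \<noteq> id"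
  shows "beta \<omega> b \<notin> rooted ` A_set"
proof
  assume "beta \<omega> b \<in> rooted ` A_set"
  then obtain \<tau> where t: "beta \<omega> b = rooted \<tau>" by blast
  obtain k where k: "k < 3" "\<omega> i b = rot k" using epi_rot assms by blast
  have k0: "k \<noteq> 0" using k assms(3) rot0 by auto
  let ?xs = "replicate i 2 @ [0, 0::nat]"
  have "last (beta \<omega> b ?xs) = \<omega> i b 0" by (simp add: beta_path)
  also have "\<dots> = k" using k by (simp add: rot_def)
  finally have "last (rooted \<tau> ?xs) = k" using t by simp
  moreover have "last (rooted \<tau> ?xs) = 0" by (subst rooted_last) auto
  ultimately show False using k0 by simp
qed

lemma gen_eq_if_images_eq:
  assumes epis: "\<forall>i. epi m (\<omega> i)" and lk: "(\<Inter>i\<in>{0..l}. kern m (\<omega> i)) = {bzero}"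
    and b: "b \<in> B_set m" "b' \<in> B_set m" and eq: "\<forall>j\<le>l. \<omega> j b = \<omega> j b'"
  shows "b = b'"
proof -
  define d where "d = (\<lambda>i. (b i + 2 * b' i) mod 3)"
  have dB: "d \<in> B_set m" using b unfolding d_def B_set_def by auto
  have bd: "badd d b' = b"
  proof
    fix i
    have "((b i + 2 * b' i) mod 3 + b' i) mod 3 = (b i + 2 * b' i + b' i) mod 3"
      by (rule mod_add_left_eq)
    also have "\<dots> = (b i + 3 * b' i) mod 3" by simp
    also have "\<dots> = b i" using b(1) unfolding B_set_def by simp
    finally show "badd d b' i = b i" unfolding badd_def d_def .
  qed
  have "d \<in> kern m (\<omega> j)" if j: "j \<in> {0..l}" for j
  proof -
    obtain kd where kd: "kd < 3" "\<omega> j d = rot kd" using epi_rot[OF _ dB] epis by blast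
    obtain k' where k': "k' < 3" "\<omega> j b' = rot k'" using epi_rot[OF _ b(2)] epis by blast
    have "\<omega> j b = \<omega> j d \<circ> \<omega> j b'" using epi_hom[OF _ dB b(2)] epis bd by metis
    then have "rot k' = rot (kd + k')" using eq j kd k' rot_comp by auto
    then have "k' mod 3 = (kd + k') mod 3" by (simp add: rot_eq_iff)
    then have "kd = 0" using kd(1) by presburger
    then show ?thesis using kd dB rot0 unfolding kern_def by simp
  qed
  then have "d \<in> (\<Inter>i\<in>{0..l}. kern m (\<omega> i))" by blast
  then have "d = bzero" using lk by blast
  then show ?thesis using bd b(2) unfolding badd_def bzero_def B_set_def by auto
qed

section \<open>Words in the generators\<close>

definition faithful :: "nat \<Rightarrow> epi_seq \<Rightarrow> bool" where
  "faithful m \<omega> \<longleftrightarrow> (\<forall>b\<in>B_set m. b \<noteq> bzero \<longrightarrow> (\<exists>i. \<omega> i b \<noteq> id))"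

datatype letter = LA nat | LB "nat \<Rightarrow> nat"

fun eval_letter :: "epi_seq \<Rightarrow> letter \<Rightarrow> nat list \<Rightarrow> nat list" where
  "eval_letter \<omega> (LA a) = rooted (rot a)"
| "eval_letter \<omega> (LB b) = beta \<omega> b"

definition eval_word :: "epi_seq \<Rightarrow> letter list \<Rightarrow> nat list \<Rightarrow> nat list" where
  "eval_word \<omega> w = foldr (\<circ>) (map (eval_letter \<omega>) w) id"

lemma eval_word_Nil[simp]: "eval_word \<omega> [] = id"
  by (simp add: eval_word_def)

lemma eval_word_Cons[simp]: "eval_word \<omega> (s # w) = eval_letter \<omega> s \<circ> eval_word \<omega> w"
  by (simp add: eval_word_def)

lemma eval_word_append: "eval_word \<omega> (u @ v) = eval_word \<omega> u \<circ> eval_word \<omega> v"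
  by (induction u) auto

fun rot_sum :: "letter list \<Rightarrow> nat" where
  "rot_sum [] = 0"
| "rot_sum (LA a # w) = a + rot_sum w"
| "rot_sum (LB b # w) = rot_sum w"

lemma rot_sum_append: "rot_sum (u @ v) = rot_sum u + rot_sum v"
proof (induction u)
  case (Cons s u) then show ?case by (cases s) auto
qed simp

definition is_rot :: "letter \<Rightarrow> bool" where
  "is_rot l = (\<exists>a. l = LA a)"

lemma eval_word_rotations:
  "\<forall>l\<in>set v. is_rot l \<Longrightarrow> eval_word \<omega> v = rooted (rot (rot_sum v))"
proof (induction v)
  case Nil then show ?case by (simp only: eval_word_Nil rot_sum.simps rot0 rooted_id)
next
  case (Cons s v)
  then obtain a where a: "s = LA a" by (auto simp: is_rot_def)
  have "rooted (rot a) \<circ> rooted (rot (rot_sum v)) = rooted (rot (a + rot_sum v))"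
    by (simp only: rooted_comp[symmetric] rot_comp)
  then show ?case using Cons a by simp
qed

fun wf_letter :: "nat \<Rightarrow> letter \<Rightarrow> bool" where
  "wf_letter m (LA a) = (a < 3)"
| "wf_letter m (LB b) = (b \<in> B_set m)"

definition wf_word :: "nat \<Rightarrow> letter list \<Rightarrow> bool" where
  "wf_word m w = (\<forall>l\<in>set w. wf_letter m l)"

definition weight :: "letter \<Rightarrow> nat" where
  "weight l = (case l of LA a \<Rightarrow> 0 | LB b \<Rightarrow> if b = bzero then 0 else 1)"

definition word_weight :: "letter list \<Rightarrow> nat" where
  "word_weight w = sum_list (map weight w)"

lemma word_weight_simps[simp]:
  "word_weight [] = 0"
  "word_weight (s # w) = weight s + word_weight w"
  "word_weight (u @ v) = word_weight u + word_weight v"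
  by (simp_all add: word_weight_def)

lemma weight_simps[simp]: "weight (LA a) = 0" "weight (LB b) = (if b = bzero then 0 else 1)"
  by (simp_all add: weight_def)

lemma eval_letter_gens: "wf_letter m l \<Longrightarrow> eval_letter \<omega> l \<in> gens m \<omega>"
  by (cases l) (auto simp: gens_def B_om_def rooted_rot_in_A)

lemma gweight_eval_letter_le:
  assumes "\<forall>i. epi m (\<omega> i)" "wf_letter m l"
  shows "gweight (eval_letter \<omega> l) \<le> weight l"
proof (cases l)
  case (LA a) then show ?thesis by (simp add: gweight_def rooted_rot_in_A)
next
  case (LB b) then show ?thesis using beta_zero[OF assms(1)] id_in_A by (auto simp: gweight_def)
qed

lemma gweight_eval_letter:
  assumes "\<forall>i. epi m (\<omega> i)" "faithful m \<omega>" "wf_letter m l"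
  shows "gweight (eval_letter \<omega> l) = weight l"
proof (cases l)
  case (LA a) then show ?thesis by (simp add: gweight_def rooted_rot_in_A)
next
  case (LB b)
  show ?thesis
  proof (cases "b = bzero")
    case True then show ?thesis using LB beta_zero[OF assms(1)] id_in_A by (auto simp: gweight_def)
  next
    case False
    then obtain i where "\<omega> i b \<noteq> id" using assms(2,3) LB unfolding faithful_def by auto
    then have "beta \<omega> b \<notin> rooted ` A_set" using beta_not_rooted assms LB by auto
    then show ?thesis using LB False by (simp add: gweight_def)
  qed
qed

lemma wlen_le_word_weight:
  assumes "\<forall>i. epi m (\<omega> i)" "wf_word m w"
  shows "wlen m \<omega> (eval_word \<omega> w) \<le> word_weight w"
proof -
  let ?ss = "map (eval_letter \<omega>) w"
  have "set ?ss \<subseteq> gens m \<omega>" using assms(2) eval_letter_gens by (auto simp: wf_word_def)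
  then have "wlen m \<omega> (eval_word \<omega> w) \<le> sum_list (map gweight ?ss)"
    unfolding wlen_def eval_word_def by (intro Least_le) blast
  also have "\<dots> \<le> word_weight w" unfolding word_weight_def map_map
    by (rule sum_list_mono) (use gweight_eval_letter_le assms in \<open>auto simp: wf_word_def\<close>)
  finally show ?thesis .
qed

lemma gen_list_lift:
  "\<forall>s\<in>set ss. s \<in> gens m \<omega> \<Longrightarrow> \<exists>w. wf_word m w \<and> map (eval_letter \<omega>) w = ss"
proof (induction ss)
  case Nil then show ?case by (simp add: wf_word_def)
next
  case (Cons s ss)
  then obtain w where w: "wf_word m w" "map (eval_letter \<omega>) w = ss" by auto
  have "s \<in> gens m \<omega>" using Cons.prems by simp
  then have "\<exists>l. wf_letter m l \<and> eval_letter \<omega> l = s"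
  proof (unfold gens_def, elim UnE)
    assume "s \<in> rooted ` A_set"
    then have "s = rooted (rot 0) \<or> s = rooted (rot 1) \<or> s = rooted (rot 2)"
      unfolding A_set_def by auto
    then show ?thesis
    proof (elim disjE)
      assume "s = rooted (rot 0)" then show ?thesis by (intro exI[where x="LA 0"]) simp
    next
      assume "s = rooted (rot 1)" then show ?thesis by (intro exI[where x="LA 1"]) simp
    next
      assume "s = rooted (rot 2)" then show ?thesis by (intro exI[where x="LA 2"]) simp
    qed
  next
    assume "s \<in> B_om m \<omega>"
    then obtain b where "b \<in> B_set m" "s = beta \<omega> b" unfolding B_om_def by auto
    then show ?thesis by (intro exI[where x="LB b"]) simp
  qed
  then obtain l where "wf_letter m l" "eval_letter \<omega> l = s" by blast
  then show ?case using w by (intro exI[where x="l # w"]) (simp add: wf_word_def)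
qed

lemma minimal_word_exists:
  assumes "\<forall>i. epi m (\<omega> i)" "faithful m \<omega>" "g \<in> G_om m \<omega>"
  shows "\<exists>w. wf_word m w \<and> eval_word \<omega> w = g \<and> word_weight w = wlen m \<omega> g"
proof -
  let ?P = "\<lambda>n. \<exists>ss. set ss \<subseteq> gens m \<omega> \<and> foldr (\<circ>) ss id = g
    \<and> sum_list (map gweight ss) = n"
  obtain ss0 where "set ss0 \<subseteq> gens m \<omega>" "foldr (\<circ>) ss0 id = g"
    using assms(3) unfolding G_om_def by blast
  then have "\<exists>n. ?P n" by blast
  then have "?P (LEAST n. ?P n)" by (rule LeastI_ex)
  then have "?P (wlen m \<omega> g)" unfolding wlen_def .
  then obtain ss where ss: "set ss \<subseteq> gens m \<omega>" "foldr (\<circ>) ss id = g"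
     "sum_list (map gweight ss) = wlen m \<omega> g" by (elim exE conjE) simp
  obtain w where w: "wf_word m w" "map (eval_letter \<omega>) w = ss" using gen_list_lift ss(1) by blast
  have "\<forall>l\<in>set w. gweight (eval_letter \<omega> l) = weight l"
    using gweight_eval_letter[OF assms(1,2)] w(1) unfolding wf_word_def by blast
  then have e: "map (\<lambda>l. gweight (eval_letter \<omega> l)) w = map weight w" by (metis map_eq_conv)
  have "sum_list (map gweight ss) = sum_list (map (\<lambda>l. gweight (eval_letter \<omega> l)) w)"
    unfolding w(2)[symmetric] by (simp add: comp_def)
  then have "word_weight w = sum_list (map gweight ss)" unfolding word_weight_def e by simp
  moreover have "eval_word \<omega> w = g" using w(2) ss(2) unfolding eval_word_def by simp
  ultimately show ?thesis using w(1) ss(3) by (intro exI[where x=w]) simp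
qed

text \<open>In \<open>s # w\<close> the letter \<open>s\<close> acts at the first-level vertex \<open>(x + rot_sum w) mod 3\<close> to which
  the rotations of \<open>w\<close> move \<open>x\<close>; a generator \<open>\<beta>\<^sub>\<omega>(b) = (\<omega>\<^sub>0(b), 1, \<beta>\<^sub>\<sigma>\<^sub>\<omega>(b))\<close> contributes
  a rotation to the section at vertex 0 and itself to the section at vertex 2.\<close>

fun letter_section :: "epi_seq \<Rightarrow> letter \<Rightarrow> nat \<Rightarrow> letter list" where
  "letter_section \<omega> (LA a) y = []"
| "letter_section \<omega> (LB b) y =
     (if y = 0 then [LA (rot_index (\<omega> 0) b)] else if y = 2 then [LB b] else [])"

fun word_section :: "epi_seq \<Rightarrow> letter list \<Rightarrow> nat \<Rightarrow> letter list" where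
  "word_section \<omega> [] x = []"
| "word_section \<omega> (s # w) x = letter_section \<omega> s ((x + rot_sum w) mod 3) @ word_section \<omega> w x"

lemma eval_letter_Cons:
  assumes "\<forall>i. epi m (\<omega> i)" "wf_letter m s" "x < 3"
  shows "eval_letter \<omega> s (x # u)
    = ((x + rot_sum [s]) mod 3) # eval_word (shift \<omega>) (letter_section \<omega> s x) u"
proof (cases s)
  case (LA a) then show ?thesis using assms by (simp add: rot_def add.commute)
next
  case (LB b)
  then have b: "b \<in> B_set m" using assms by simp
  have "x = 0 \<or> x = 1 \<or> x = 2" using assms by auto
  then show ?thesis using LB rot_index(2)[OF _ b, of "\<omega> 0"] assms(1) by (auto simp: shift_app)
qed

lemma eval_word_Cons_arg:
  assumes "\<forall>i. epi m (\<omega> i)" "wf_word m w" "x < 3"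
  shows "eval_word \<omega> w (x # u)
    = ((x + rot_sum w) mod 3) # eval_word (shift \<omega>) (word_section \<omega> w x) u"
  using assms(2)
proof (induction w arbitrary: u)
  case Nil then show ?case using assms by simp
next
  case (Cons s w)
  let ?y = "(x + rot_sum w) mod 3"
  have ws: "wf_letter m s" "wf_word m w" using Cons.prems by (auto simp: wf_word_def)
  have "eval_word \<omega> (s # w) (x # u)
      = eval_letter \<omega> s (?y # eval_word (shift \<omega>) (word_section \<omega> w x) u)"
    using Cons.IH[OF ws(2)] by simp
  also have "\<dots> = ((?y + rot_sum [s]) mod 3)
      # eval_word (shift \<omega>) (letter_section \<omega> s ?y) (eval_word (shift \<omega>) (word_section \<omega> w x) u)"
    using eval_letter_Cons[OF assms(1) ws(1)] by simp
  also have "\<dots> = ((x + rot_sum (s # w)) mod 3) # eval_word (shift \<omega>) (word_section \<omega> (s # w) x) u"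
    by (cases s) (simp_all add: eval_word_append mod_add_left_eq mod_add_right_eq add.commute
        add.left_commute)
  finally show ?case .
qed

lemma sec_eval_word:
  assumes "\<forall>i. epi m (\<omega> i)" "wf_word m w" "x < 3"
  shows "sec (eval_word \<omega> w) x = eval_word (shift \<omega>) (word_section \<omega> w x)"
  unfolding sec_def using eval_word_Cons_arg[OF assms] by auto

lemma word_section_append:
  "word_section \<omega> (u @ v) x = word_section \<omega> u ((x + rot_sum v) mod 3) @ word_section \<omega> v x"
proof (induction u)
  case Nil then show ?case by simp
next
  case (Cons s u)
  have "((x + rot_sum v) mod 3 + rot_sum u) mod 3 = (x + rot_sum v + rot_sum u) mod 3"
    by (rule mod_add_left_eq)
  then have "((x + rot_sum v) mod 3 + rot_sum u) mod 3 = (x + rot_sum (u @ v)) mod 3"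
    by (simp add: rot_sum_append add.commute add.left_commute)
  then show ?case using Cons by simp
qed

lemma word_section_rotations: "\<forall>l\<in>set v. is_rot l \<Longrightarrow> word_section \<omega> v x = []"
  by (induction v) (auto simp: is_rot_def)

lemma weight_letter_section:
  "(\<Sum>x<3. word_weight (letter_section \<omega> s ((x + (t::nat)) mod 3))) = weight s"
proof (cases s)
  case (LA a) then show ?thesis by simp
next
  case (LB b)
  have e: "(x + t) mod 3 = (x + t mod 3) mod 3" for x :: nat by (simp add: mod_add_right_eq)
  have "t mod 3 = 0 \<or> t mod 3 = 1 \<or> t mod 3 = 2" by presburger
  then show ?thesis using LB unfolding sum_lessThan_3 e by auto
qed

lemma weight_word_section: "(\<Sum>x<3. word_weight (word_section \<omega> w x)) = word_weight w"
proof (induction w)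
  case Nil then show ?case by simp
next
  case (Cons s w)
  have "(\<Sum>x<3. word_weight (word_section \<omega> (s # w) x))
      = (\<Sum>x<3. word_weight (letter_section \<omega> s ((x + rot_sum w) mod 3)))
        + (\<Sum>x<3. word_weight (word_section \<omega> w x))"
    by (simp add: sum.distrib)
  then show ?case using Cons weight_letter_section by simp
qed

lemma wf_word_section:
  "\<forall>i. epi m (\<omega> i) \<Longrightarrow> wf_word m w \<Longrightarrow> wf_word m (word_section \<omega> w x)"
proof (induction w)
  case Nil then show ?case by (simp add: wf_word_def)
next
  case (Cons s w)
  have "wf_word m (letter_section \<omega> s ((x + rot_sum w) mod 3))"
  proof (cases s)
    case (LB b) then have "b \<in> B_set m" using Cons.prems by (simp add: wf_word_def)
    then show ?thesis using LB rot_index(1) Cons.prems(1) by (auto simp: wf_word_def)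
  qed (simp add: wf_word_def)
  then show ?case using Cons by (auto simp: wf_word_def)
qed

definition nontrivial :: "letter list \<Rightarrow> bool" where
  "nontrivial w = (\<forall>l\<in>set w. l \<noteq> LB bzero)"

lemma nontrivial_word_section: "nontrivial w \<Longrightarrow> nontrivial (word_section \<omega> w x)"
proof (induction w)
  case Nil then show ?case by (simp add: nontrivial_def)
next
  case (Cons s w)
  then show ?case by (cases s) (auto simp: nontrivial_def)
qed

section \<open>Alternating normal form\<close>

definition shape_letter :: "letter \<Rightarrow> letter" where
  "shape_letter l = (case l of LA _ \<Rightarrow> LA 0 | LB _ \<Rightarrow> LB bzero)"

lemma shape_letter_simps[simp]: "shape_letter (LA a) = LA 0" "shape_letter (LB b) = LB bzero"
  by (simp_all add: shape_letter_def)

fun flip_letter :: "letter \<Rightarrow> letter" where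
  "flip_letter (LA _) = LB bzero"
| "flip_letter (LB _) = LA 0"

fun alternating :: "letter \<Rightarrow> nat \<Rightarrow> letter list" where
  "alternating s 0 = []"
| "alternating s (Suc j) = s # alternating (flip_letter s) j"

lemma alternating_SS: "alternating (LA 0) (Suc (Suc j)) = LA 0 # LB bzero # alternating (LA 0) j"
  by simp

fun add_head_rot :: "nat \<Rightarrow> letter list \<Rightarrow> letter list" where
  "add_head_rot a (LA e # r) = LA ((a + e) mod 3) # r"
| "add_head_rot a r = LA (a mod 3) # r"

fun normalize :: "letter list \<Rightarrow> letter list" where
  "normalize [] = [LA 0]"
| "normalize (LA a # w) = add_head_rot a (normalize w)"
| "normalize (LB b # w) = (if b = bzero then normalize w else LA 0 # LB b # normalize w)"

lemma normalize_head: "\<exists>e r. normalize w = LA e # r \<and> e < 3"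
  by (induction w rule: normalize.induct) auto

lemma eval_word_normalize:
  assumes "\<forall>i. epi m (\<omega> i)" shows "eval_word \<omega> (normalize w) = eval_word \<omega> w"
proof (induction w rule: normalize.induct)
  case 1 then show ?case using rot0 rooted_id by simp
next
  case (2 a w)
  obtain e r where er: "normalize w = LA e # r" "e < 3" using normalize_head by blast
  have "eval_word \<omega> (normalize (LA a # w)) = rooted (rot ((a + e) mod 3)) \<circ> eval_word \<omega> r"
    using er by simp
  also have "\<dots> = rooted (rot a) \<circ> (rooted (rot e) \<circ> eval_word \<omega> r)"
    by (simp add: rot_mod rooted_comp rot_comp[symmetric] o_assoc)
  also have "rooted (rot e) \<circ> eval_word \<omega> r = eval_word \<omega> w"
    using 2 er by (simp add: o_def)
  finally show ?case by simp
next
  case (3 b w) then show ?case using beta_zero[OF assms] by (simp add: rot0 rooted_id)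
qed

lemma wf_word_normalize: "wf_word m w \<Longrightarrow> wf_word m (normalize w)"
proof (induction w rule: normalize.induct)
  case 1 then show ?case by (simp add: wf_word_def)
next
  case (2 a w)
  obtain e r where er: "normalize w = LA e # r" "e < 3" using normalize_head by blast
  then show ?case using 2 by (simp add: wf_word_def)
next
  case (3 b w) then show ?case by (simp add: wf_word_def)
qed

lemma word_weight_normalize: "word_weight (normalize w) = word_weight w"
proof (induction w rule: normalize.induct)
  case (2 a w)
  obtain e r where er: "normalize w = LA e # r" "e < 3" using normalize_head by blast
  then show ?case using 2 by simp
qed auto

lemma nontrivial_normalize: "nontrivial (normalize w)"
proof (induction w rule: normalize.induct)
  case (2 a w)
  obtain e r where er: "normalize w = LA e # r" "e < 3" using normalize_head by blast
  then show ?case using 2 by (simp add: nontrivial_def)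
qed (auto simp: nontrivial_def)

lemma shape_normalize: "map shape_letter (normalize w) = alternating (LA 0) (2 * word_weight w + 1)"
proof (induction w rule: normalize.induct)
  case 1 then show ?case by (simp add: shape_letter_def)
next
  case (2 a w)
  obtain e r where er: "normalize w = LA e # r" "e < 3" using normalize_head by blast
  then show ?case using 2 by (simp add: shape_letter_def)
next
  case (3 b w) then show ?case by (simp add: shape_letter_def)
qed

section \<open>Reduced words\<close>

text \<open>Two generators separated only by rotations of total \<open>0\<close> could be merged into one, so
  words of minimal weight are reduced.\<close>

definition reduced :: "letter list \<Rightarrow> bool" where
  "reduced w \<longleftrightarrow> (\<forall>u b v c z. w = u @ LB b # v @ LB c # z \<longrightarrow> (\<forall>l\<in>set v. is_rot l)
     \<longrightarrow> rot_sum v mod 3 \<noteq> 0)"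

lemma reducedD:
  assumes "reduced w" "w = u @ LB b # v @ LB c # z" "\<forall>l\<in>set v. is_rot l"
  shows "rot_sum v mod 3 \<noteq> 0"
  using assms unfolding reduced_def by blast

lemma reduced_append: "reduced (u @ w) \<Longrightarrow> reduced w"
  unfolding reduced_def by (metis append.assoc)

lemma reduced_Cons: "reduced (s # w) \<Longrightarrow> reduced w"
  using reduced_append[of "[s]"] by simp

lemma minimal_reduced:
  assumes epis: "\<forall>i. epi m (\<omega> i)" and wf: "wf_word m w" and nzw: "nontrivial w"
    and mn: "word_weight w = wlen m \<omega> (eval_word \<omega> w)"
  shows "reduced w"
  unfolding reduced_def
proof (intro allI impI notI)
  fix u b v c z
  assume w: "w = u @ LB b # v @ LB c # z" and la: "\<forall>l\<in>set v. is_rot l"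
    and t0: "rot_sum v mod 3 = 0"
  have bc: "b \<in> B_set m" "c \<in> B_set m" "b \<noteq> bzero" "c \<noteq> bzero"
    using wf nzw w by (auto simp: wf_word_def nontrivial_def)
  have v_id: "eval_word \<omega> v = id"
    using eval_word_rotations[OF la] t0 rot_mod[of "rot_sum v"] rot0 rooted_id by simp
  let ?w' = "u @ LB (badd b c) # z"
  have "eval_word \<omega> ?w' = eval_word \<omega> w"
    using w v_id beta_hom[OF epis bc(1,2)] by (simp add: eval_word_append o_assoc)
  moreover have "wf_word m ?w'" using wf w badd_B[OF bc(1,2)] by (auto simp: wf_word_def)
  ultimately have "wlen m \<omega> (eval_word \<omega> w) \<le> word_weight ?w'"
    using wlen_le_word_weight[OF epis] by metis
  moreover have "word_weight ?w' < word_weight w" using w bc by simp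
  ultimately show False using mn by simp
qed

lemma incompressible_section:
  assumes epis: "\<forall>i. epi m (\<omega> i)" and wf: "wf_word m w"
    and mn: "word_weight w = wlen m \<omega> (eval_word \<omega> w)"
    and inc: "eval_word \<omega> w \<in> Inc m (Suc k) \<omega>" and x: "x < 3"
  shows "word_weight (word_section \<omega> w x)
      = wlen m (shift \<omega>) (eval_word (shift \<omega>) (word_section \<omega> w x))"
    and "eval_word (shift \<omega>) (word_section \<omega> w x) \<in> Inc m k (shift \<omega>)"
proof -
  let ?g = "eval_word \<omega> w"
  have sec: "sec ?g y = eval_word (shift \<omega>) (word_section \<omega> w y)" if "y < 3" for y
    using sec_eval_word[OF epis wf that] .
  have inc_sec: "\<forall>y<3. sec ?g y \<in> Inc m k (shift \<omega>)"
    and sum_sec: "(\<Sum>y<3. wlen m (shift \<omega>) (sec ?g y)) = wlen m \<omega> ?g"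
    using inc by auto
  have le: "wlen m (shift \<omega>) (eval_word (shift \<omega>) (word_section \<omega> w y))
      \<le> word_weight (word_section \<omega> w y)"
    for y by (rule wlen_le_word_weight[OF epis_shift[OF epis] wf_word_section[OF epis wf]])
  have "(\<Sum>y<3. wlen m (shift \<omega>) (eval_word (shift \<omega>) (word_section \<omega> w y)))
      = (\<Sum>y<3. wlen m (shift \<omega>) (sec ?g y))"
    by (rule sum.cong) (auto simp: sec)
  also have "\<dots> = (\<Sum>y<3. word_weight (word_section \<omega> w y))"
    using sum_sec mn weight_word_section by simp
  finally have "wlen m (shift \<omega>) (eval_word (shift \<omega>) (word_section \<omega> w x))
      = word_weight (word_section \<omega> w x)"
    by (rule sum_mono_inv[OF _ le]) (use x in auto)
  then show "word_weight (word_section \<omega> w x)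
      = wlen m (shift \<omega>) (eval_word (shift \<omega>) (word_section \<omega> w x))"
    by (rule sym)
  show "eval_word (shift \<omega>) (word_section \<omega> w x) \<in> Inc m k (shift \<omega>)"
    using inc_sec x sec by auto
qed

fun hered_reduced :: "epi_seq \<Rightarrow> nat \<Rightarrow> letter list \<Rightarrow> bool" where
  "hered_reduced \<omega> 0 w = reduced w"
| "hered_reduced \<omega> (Suc k) w
     = (reduced w \<and> (\<forall>x<3. hered_reduced (shift \<omega>) k (word_section \<omega> w x)))"

lemma hered_reduced_reduced: "hered_reduced \<omega> k w \<Longrightarrow> reduced w"
  by (cases k) auto

lemma Inc_hered_reduced:
  assumes "\<forall>i. epi m (\<omega> i)" "wf_word m w" "nontrivial w"
    "word_weight w = wlen m \<omega> (eval_word \<omega> w)" "eval_word \<omega> w \<in> Inc m k \<omega>"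
  shows "hered_reduced \<omega> k w"
  using assms
proof (induction k arbitrary: \<omega> w)
  case 0 then show ?case using minimal_reduced by simp
next
  case (Suc k)
  have "reduced w" using minimal_reduced Suc.prems by blast
  moreover have "hered_reduced (shift \<omega>) k (word_section \<omega> w x)" if x: "x < 3" for x
    using Suc.IH[OF epis_shift[OF Suc.prems(1)] wf_word_section[OF Suc.prems(1,2)]
        nontrivial_word_section[OF Suc.prems(3)] incompressible_section[OF Suc.prems(1,2,4,5) x]] .
  ultimately show ?case by simp
qed

section \<open>The offsets of the generators form a walk\<close>

text \<open>The offset of a generator is the rotation applied to its right; in the section at \<open>x\<close>
  it acts at vertex \<open>(x + offset) mod 3\<close>.\<close>

fun gen_offsets :: "letter list \<Rightarrow> nat list" where
  "gen_offsets [] = []"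
| "gen_offsets (LA a # w) = gen_offsets w"
| "gen_offsets (LB b # w) = (rot_sum w mod 3) # gen_offsets w"

fun walk :: "nat \<Rightarrow> nat \<Rightarrow> nat \<Rightarrow> nat list" where
  "walk t p 0 = []"
| "walk t p (Suc M) = t # walk ((t + (if 0 < p then 1 else 2)) mod 3) (p - 1) M"

definition is_walk :: "nat list \<Rightarrow> bool" where
  "is_walk T \<longleftrightarrow> (\<exists>t p. t < 3 \<and> p \<le> length T \<and> T = walk t p (length T))"

lemma length_walk[simp]: "length (walk t p M) = M"
  by (induction M arbitrary: t p) auto

lemma first_gen:
  assumes "gen_offsets w = t # T"
  obtains v c z
  where "w = v @ LB c # z" "\<forall>l\<in>set v. is_rot l" "t = rot_sum z mod 3" "gen_offsets z = T"
  using assms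
proof (induction w arbitrary: thesis)
  case (Cons s w)
  show ?case
  proof (cases s)
    case (LA a)
    with Cons.prems(2) obtain v c z where "w = v @ LB c # z" "\<forall>l\<in>set v. is_rot l"
      "t = rot_sum z mod 3" "gen_offsets z = T"
      by (auto intro: Cons.IH)
    with LA show ?thesis by (intro Cons.prems(1)[of "LA a # v"]) (auto simp: is_rot_def)
  next
    case (LB b)
    with Cons.prems show ?thesis by (intro Cons.prems(1)[of "[]" b w]) auto
  qed
qed simp

lemma word_section_first_gen:
  assumes "w = v @ LB c # z" "\<forall>l\<in>set v. is_rot l"
  shows "word_section \<omega> w x
    = letter_section \<omega> (LB c) ((x + rot_sum z) mod 3) @ word_section \<omega> z x"
  using assms by (simp add: word_section_append word_section_rotations)

lemma reduced_offsets_neq: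
  assumes "reduced (LB b # w)" "gen_offsets w = t # T"
  shows "t \<noteq> rot_sum w mod 3"
proof -
  obtain v c z where vcz: "w = v @ LB c # z" "\<forall>l\<in>set v. is_rot l" "t = rot_sum z mod 3"
    using first_gen[OF assms(2)] .
  have "rot_sum v mod 3 \<noteq> 0"
    using reducedD[OF assms(1), of "[]" b v c z] vcz(1,2) by simp
  then have "(rot_sum v + rot_sum z) mod 3 \<noteq> rot_sum z mod 3"
    by (rule mod3_add_neq)
  then show ?thesis
    using vcz(1,3) by (simp add: rot_sum_append)
qed

text \<open>Offsets going down by one and then up by one would make a section contain two adjacent
  generators: at the \<open>x\<close> for which the outer generator sits above the third vertex, the middle
  one contributes nothing to that section and the inner one reappears in it.\<close>

lemma reduced_sections_no_valley:
  assumes red: "\<forall>x<3. reduced (word_section \<omega> (LB b # w) x)"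
    and offs: "gen_offsets w = t # t' # T" and down: "t = (rot_sum w mod 3 + 2) mod 3"
  shows "t' \<noteq> (t + 1) mod 3"
proof
  assume up: "t' = (t + 1) mod 3"
  obtain v c z where vcz: "w = v @ LB c # z" "\<forall>l\<in>set v. is_rot l" "t = rot_sum z mod 3"
      "gen_offsets z = t' # T"
    using first_gen[OF offs] .
  obtain v' d z' where vdz: "z = v' @ LB d # z'" "\<forall>l\<in>set v'. is_rot l" "t' = rot_sum z' mod 3"
    using first_gen[OF vcz(4)] .
  define a where "a = rot_sum w mod 3"
  obtain x where x: "x < 3" "(x + a) mod 3 = 2"
    using mod3_shift_surj[of 2 a] by auto
  have "a < 3" unfolding a_def by simp
  then have "(x + t) mod 3 = 1" "(x + t') mod 3 = 2"
    using x down up unfolding a_def[symmetric] by (auto dest!: less3_cases)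
  then have "(x + rot_sum z) mod 3 = 1" "(x + rot_sum z') mod 3 = 2"
    using vcz(3) vdz(3) by (simp_all add: mod_add_right_eq)
  moreover have "(x + rot_sum w) mod 3 = 2"
    using x(2) unfolding a_def by (simp add: mod_add_right_eq)
  ultimately have "word_section \<omega> (LB b # w) x = [] @ LB b # [] @ LB d # word_section \<omega> z' x"
    using word_section_first_gen[OF vcz(1,2)] word_section_first_gen[OF vdz(1,2)] by simp
  then have "rot_sum [] mod 3 \<noteq> 0"
    by (rule reducedD[OF red[rule_format, OF x(1)]]) simp
  then show False by simp
qed

lemma is_walk_single: "t < 3 \<Longrightarrow> is_walk [t]"
  unfolding is_walk_def by (intro exI[of _ t] exI[of _ 0]) simp

lemma hd_tl_walk: "0 < p \<Longrightarrow> hd (tl (walk t p (Suc (Suc M)))) = (t + 1) mod 3"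
  by simp

lemma is_walk_Cons:
  assumes walk: "is_walk (t # T)" and t0: "t0 < 3" and neq: "t \<noteq> t0"
    and no_valley: "t = (t0 + 2) mod 3 \<Longrightarrow> T \<noteq> [] \<Longrightarrow> hd T \<noteq> (t + 1) mod 3"
  shows "is_walk (t0 # t # T)"
proof -
  obtain p where p: "t < 3" "p \<le> Suc (length T)" and tT: "walk t p (Suc (length T)) = t # T"
    using walk unfolding is_walk_def by auto
  have "t = (t0 + 1) mod 3 \<or> t = (t0 + 2) mod 3"
    using p(1) t0 neq by (auto dest!: less3_cases)
  then consider (up) "(t0 + 1) mod 3 = t" | (down) "(t0 + 2) mod 3 = t" by auto
  then show ?thesis
  proof cases
    case up
    then have "walk t0 (Suc p) (Suc (Suc (length T))) = t0 # walk t p (Suc (length T))"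
      by simp
    also have "\<dots> = t0 # t # T"
      by (simp only: tT)
    finally show ?thesis unfolding is_walk_def using t0 p(2) by (metis Suc_le_mono length_Cons)
  next
    case down
    have "walk t 0 (Suc (length T)) = t # T"
    proof (cases "T = []")
      case False
      have "hd T = hd (tl (walk t p (Suc (Suc (length (tl T))))))"
        using tT False by simp
      then have "p = 0"
        using hd_tl_walk down False no_valley by (metis neq0_conv)
      then show ?thesis using tT by simp
    qed simp
    then have "walk t0 0 (Suc (Suc (length T))) = t0 # t # T"
      using down by simp
    then show ?thesis unfolding is_walk_def using t0 by (metis le0 length_Cons)
  qed
qed

lemma gen_offsets_walk:
  "reduced w \<Longrightarrow> \<forall>x<3. reduced (word_section \<omega> w x) \<Longrightarrow> is_walk (gen_offsets w)"
proof (induction w)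
  case Nil then show ?case unfolding is_walk_def by (intro exI[of _ 0]) simp
next
  case (Cons s w)
  have "\<forall>x<3. reduced (word_section \<omega> w x)"
    using Cons.prems(2) by (auto intro: reduced_append)
  then have IH: "is_walk (gen_offsets w)"
    using Cons.IH reduced_Cons[OF Cons.prems(1)] by blast
  show ?case
  proof (cases s)
    case (LB b)
    show ?thesis
    proof (cases "gen_offsets w")
      case Nil then show ?thesis using LB is_walk_single by simp
    next
      case (Cons t T)
      have "is_walk (rot_sum w mod 3 # t # T)"
      proof (rule is_walk_Cons)
        show "t \<noteq> rot_sum w mod 3"
          using reduced_offsets_neq Cons.prems(1) LB Cons by blast
        show "hd T \<noteq> (t + 1) mod 3" if "t = (rot_sum w mod 3 + 2) mod 3" "T \<noteq> []"
        proof -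
          have "gen_offsets w = t # hd T # tl T" using Cons that(2) by simp
          then show ?thesis
            using reduced_sections_no_valley[OF _ _ that(1)] Cons.prems(2) LB by blast
        qed
      qed (use IH Cons in auto)
      then show ?thesis using LB Cons by simp
    qed
  qed (use IH in simp)
qed

lemma card_walks:
  "finite {T. is_walk T \<and> length T = M} \<and> card {T. is_walk T \<and> length T = M} \<le> 3 * (M + 1)"
proof -
  have sub: "{T. is_walk T \<and> length T = M} \<subseteq> (\<lambda>(t, p). walk t p M) ` ({..<3} \<times> {..M})"
  proof
    fix T assume "T \<in> {T. is_walk T \<and> length T = M}"
    then obtain t p where "t < 3" "p \<le> M" "T = walk t p M" "length T = M"
      unfolding is_walk_def by auto
    then show "T \<in> (\<lambda>(t, p). walk t p M) ` ({..<3} \<times> {..M})" by force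
  qed
  have f: "finite ((\<lambda>(t, p). walk t p M) ` ({..<3::nat} \<times> {..M}))" by simp
  have "card ((\<lambda>(t, p). walk t p M) ` ({..<3::nat} \<times> {..M})) \<le> card ({..<3::nat} \<times> {..M})"
    by (rule card_image_le) simp
  also have "\<dots> = 3 * (M + 1)" by (simp add: card_cartesian_product)
  finally show ?thesis using card_mono[OF f sub] finite_subset[OF sub f] by simp
qed

lemma length_gen_offsets_alternating: "length (gen_offsets (alternating (LA 0) (2 * k + 1))) = k"
proof (induction k)
  case 0 then show ?case by simp
next
  case (Suc k)
  have "2 * Suc k + 1 = Suc (Suc (2 * k + 1))" by simp
  then show ?case using Suc by (simp only: alternating_SS) simp
qed

section \<open>Shapes of the sections\<close>

text \<open>A generator at offset \<open>t\<close> contributes to the section at \<open>x\<close> a rotation, nothing or a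
  generator according as \<open>(x + t) mod 3\<close> is 0, 1 or 2; so the shape of each section is
  determined by the offsets.\<close>

definition offset_shape :: "nat \<Rightarrow> letter list" where
  "offset_shape y = (if y = 0 then [LA 0] else if y = 2 then [LB bzero] else [])"

definition offsets_shape :: "nat \<Rightarrow> nat list \<Rightarrow> letter list" where
  "offsets_shape x T = concat (map (\<lambda>t. offset_shape ((x + t) mod 3)) T)"

lemma offsets_shape_simps[simp]:
  "offsets_shape x [] = []"
  "offsets_shape x (t # T) = offset_shape ((x + t) mod 3) @ offsets_shape x T"
  by (simp_all add: offsets_shape_def)

definition section_shape :: "letter list \<Rightarrow> nat \<Rightarrow> letter list" where
  "section_shape w x = offsets_shape x (gen_offsets w)"

lemma shape_word_section: "map shape_letter (word_section \<omega> w x) = section_shape w x"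
proof (induction w)
  case Nil then show ?case by (simp add: section_shape_def)
next
  case (Cons s w)
  show ?case
  proof (cases s)
    case (LA a) then show ?thesis using Cons by (simp add: section_shape_def)
  next
    case (LB b)
    have "(x + rot_sum w mod 3) mod 3 = (x + rot_sum w) mod 3" by (simp add: mod_add_right_eq)
    then show ?thesis using Cons LB by (simp add: section_shape_def offset_shape_def)
  qed
qed

lemma length_gen_offsets_shape: "length (gen_offsets (map shape_letter w)) = length (gen_offsets w)"
proof (induction w)
  case (Cons s w) then show ?case by (cases s) auto
qed simp

lemma length_gen_offsets_offsets_shape: "length (gen_offsets (offsets_shape x T)) \<le> length T"
proof (induction T)
  case (Cons t T) then show ?case by (auto simp: offset_shape_def)
qed simp

lemma length_gen_offsets_section_shape:
  "length (gen_offsets (section_shape w x)) \<le> length (gen_offsets w)"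
  unfolding section_shape_def by (rule length_gen_offsets_offsets_shape)

text \<open>In a word of known shape and known offsets, a rotation lying between two generators is
  determined by the difference of their offsets; \<open>free_rots after_gen r\<close> counts the other
  rotations of \<open>r\<close>, where \<open>after_gen\<close> records whether \<open>r\<close> follows a generator.\<close>

fun starts_gen :: "letter list \<Rightarrow> bool" where
  "starts_gen (LB b # r) = True"
| "starts_gen _ = False"

fun free_rots :: "bool \<Rightarrow> letter list \<Rightarrow> nat" where
  "free_rots after_gen [] = 0"
| "free_rots after_gen (LB b # r) = free_rots True r"
| "free_rots after_gen (LA a # r) = (if after_gen \<and> starts_gen r then 0 else 1) + free_rots False r"

fun free_rot_values :: "bool \<Rightarrow> letter list \<Rightarrow> nat list" where
  "free_rot_values after_gen [] = []"
| "free_rot_values after_gen (LB b # r) = free_rot_values True r"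
| "free_rot_values after_gen (LA a # r)
     = (if after_gen \<and> starts_gen r then [] else [a]) @ free_rot_values False r"

lemma length_free_rot_values: "length (free_rot_values after_gen r) = free_rots after_gen r"
  by (induction after_gen r rule: free_rot_values.induct) auto

lemma starts_gen_shape: "starts_gen (map shape_letter r) = starts_gen r"
proof (cases r)
  case (Cons s r') then show ?thesis by (cases s) auto
qed simp

lemma free_rots_shape: "free_rots after_gen (map shape_letter r) = free_rots after_gen r"
  by (induction after_gen r rule: free_rots.induct) (auto simp: starts_gen_shape)

lemma free_rots_le_False: "free_rots after_gen r \<le> free_rots False r"
proof (cases r)
  case (Cons s r') then show ?thesis by (cases s) auto
qed simp

lemma starts_gen_append: "A \<noteq> [] \<Longrightarrow> starts_gen (A @ B) = starts_gen A"
proof (cases A)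
  case (Cons s A') then show ?thesis by (cases s) auto
qed simp

lemma free_rots_append: "free_rots after_gen (A @ B) \<le> free_rots after_gen A + free_rots False B"
proof (induction A arbitrary: after_gen)
  case Nil then show ?case using free_rots_le_False by simp
next
  case (Cons s A)
  show ?case
  proof (cases s)
    case (LB b) then show ?thesis using Cons by simp
  next
    case (LA a)
    show ?thesis
    proof (cases "A = []")
      case True then show ?thesis using LA by simp
    next
      case False
      then show ?thesis using LA Cons.IH[of False] starts_gen_append[OF False, of B] by simp
    qed
  qed
qed

lemma free_rots_alternating_aux:
  "free_rots True (alternating (LA 0) j) \<le> 1 \<and> (\<forall>g. free_rots g (alternating (LB bzero) j) \<le> 1)"
proof (induction j)
  case 0 then show ?case by simp
next
  case (Suc j)
  have "free_rots True (alternating (LA 0) (Suc j)) \<le> 1"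
  proof (cases j)
    case 0 then show ?thesis by simp
  next
    case (Suc j') then show ?thesis using Suc.IH by simp
  qed
  then show ?case using Suc.IH by simp
qed

lemma free_rots_alternating:
  "s = LA 0 \<or> s = LB bzero \<Longrightarrow> free_rots after_gen (alternating s j) \<le> 2"
proof (elim disjE)
  assume s: "s = LA 0"
  show ?thesis
  proof (cases j)
    case 0 then show ?thesis using s by simp
  next
    case (Suc j')
    have "free_rots False (alternating (LB bzero) j') \<le> 1"
      using free_rots_alternating_aux[of j'] by blast
    then show ?thesis using s Suc by simp
  qed
next
  assume s: "s = LB bzero"
  have "free_rots after_gen (alternating (LB bzero) j) \<le> 1"
    using free_rots_alternating_aux[of j] by blast
  then show ?thesis using s by simp
qed

lemma free_rots_alternating_root: "free_rots False (alternating (LA 0) j) \<le> 4"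
  using free_rots_alternating[of "LA 0" False j] by simp

definition up_start :: "nat \<Rightarrow> letter" where
  "up_start y = (if y = 0 then LA 0 else LB bzero)"

definition down_start :: "nat \<Rightarrow> letter" where
  "down_start y = (if y = 2 then LB bzero else LA 0)"

lemma down_start_step:
  "y < 3 \<Longrightarrow>
    \<exists>j'. offset_shape y @ alternating (down_start ((y + 2) mod 3)) j = alternating (down_start y) j'"
  by (auto dest!: less3_cases simp: offset_shape_def down_start_def
      intro: exI[of _ "Suc j"] exI[of _ j])

lemma up_start_step:
  "y < 3 \<Longrightarrow>
    \<exists>j'. offset_shape y @ alternating (up_start ((y + 1) mod 3)) j = alternating (up_start y) j'"
  by (auto dest!: less3_cases simp: offset_shape_def up_start_def
      intro: exI[of _ "Suc j"] exI[of _ j])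

lemma offsets_shape_descent:
  "x < 3 \<Longrightarrow> \<exists>j. offsets_shape x (walk t 0 M) = alternating (down_start ((x + t) mod 3)) j"
proof (induction M arbitrary: t)
  case 0 then show ?case by (intro exI[of _ 0]) simp
next
  case (Suc M)
  obtain j where j: "offsets_shape x (walk ((t + 2) mod 3) 0 M)
      = alternating (down_start (((x + t) mod 3 + 2) mod 3)) j"
    using Suc.IH[OF Suc.prems, of "(t + 2) mod 3"] mod3_add_mod_add[of x t 2] by auto
  obtain j'
    where "offset_shape ((x + t) mod 3) @ alternating (down_start (((x + t) mod 3 + 2) mod 3)) j
      = alternating (down_start ((x + t) mod 3)) j'"
    using down_start_step[of "(x + t) mod 3" j] by auto
  then show ?case using j by (intro exI[of _ j']) simp
qed

lemma offsets_shape_walk: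
  "x < 3 \<Longrightarrow> \<exists>j s' j'. (s' = LA 0 \<or> s' = LB bzero)
     \<and> offsets_shape x (walk t p M) = alternating (up_start ((x + t) mod 3)) j @ alternating s' j'"
proof (induction M arbitrary: t p)
  case 0 then show ?case by (intro exI[of _ 0] exI[of _ "LA 0"]) simp
next
  case (Suc M)
  show ?case
  proof (cases "p = 0")
    case True
    obtain j where "offsets_shape x (walk t 0 (Suc M)) = alternating (down_start ((x + t) mod 3)) j"
      using offsets_shape_descent[OF Suc.prems] by blast
    moreover have "down_start ((x + t) mod 3) = LA 0 \<or> down_start ((x + t) mod 3) = LB bzero"
      by (simp add: down_start_def)
    ultimately show ?thesis using True
      by (intro exI[of _ 0] exI[of _ "down_start ((x + t) mod 3)"] exI[of _ j]) simp
  next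
    case False
    obtain j s' j' where j: "s' = LA 0 \<or> s' = LB bzero"
      "offsets_shape x (walk ((t + 1) mod 3) (p - 1) M)
         = alternating (up_start (((x + t) mod 3 + 1) mod 3)) j @ alternating s' j'"
      using Suc.IH[OF Suc.prems, of "(t + 1) mod 3" "p - 1"] mod3_add_mod_add[of x t 1] by auto
    obtain j'' where
      j'': "offset_shape ((x + t) mod 3) @ alternating (up_start (((x + t) mod 3 + 1) mod 3)) j
        = alternating (up_start ((x + t) mod 3)) j''"
      using up_start_step[of "(x + t) mod 3" j] by auto
    have "offsets_shape x (walk t p (Suc M))
        = offset_shape ((x + t) mod 3) @ offsets_shape x (walk ((t + 1) mod 3) (p - 1) M)"
      using False by simp
    also have "\<dots> = alternating (up_start ((x + t) mod 3)) j'' @ alternating s' j'"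
      using j(2) j'' by simp
    finally show ?thesis using j(1) by blast
  qed
qed

lemma free_rots_section_shape:
  assumes "is_walk (gen_offsets w)" "x < 3"
  shows "free_rots False (section_shape w x) \<le> 4"
proof -
  obtain t p where "gen_offsets w = walk t p (length (gen_offsets w))"
    using assms(1) unfolding is_walk_def by blast
  then obtain j s' j' where j: "s' = LA 0 \<or> s' = LB bzero"
    "section_shape w x = alternating (up_start ((x + t) mod 3)) j @ alternating s' j'"
    using offsets_shape_walk[OF assms(2), of t p] unfolding section_shape_def by metis
  have "free_rots False (section_shape w x)
      \<le> free_rots False (alternating (up_start ((x + t) mod 3)) j)
        + free_rots False (alternating s' j')"
    unfolding j(2) by (rule free_rots_append)
  also have "\<dots> \<le> 2 + 2"
    by (intro add_mono free_rots_alternating) (use j(1) in \<open>auto simp: up_start_def\<close>)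
  finally show ?thesis by simp
qed

section \<open>Counting trees of data\<close>

definition canonical :: "letter list \<Rightarrow> bool" where
  "canonical r = (\<forall>l\<in>set r. case l of LA a \<Rightarrow> a < 3 | LB b \<Rightarrow> b = bzero)"

text \<open>With \<open>after_gen\<close> set, the equal offsets of the preceding generators force
  \<open>rot_sum v1 = rot_sum v2\<close> modulo 3, which determines a rotation lying between two generators.\<close>

lemma canonical_inj:
  "map shape_letter v1 = map shape_letter v2 \<Longrightarrow> gen_offsets v1 = gen_offsets v2 \<Longrightarrow>
   free_rot_values after_gen v1 = free_rot_values after_gen v2 \<Longrightarrow>
   (after_gen \<longrightarrow> rot_sum v1 mod 3 = rot_sum v2 mod 3) \<Longrightarrow> canonical v1 \<Longrightarrow> canonical v2 \<Longrightarrow>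
   v1 = v2"
proof (induction v1 arbitrary: v2 after_gen)
  case Nil then show ?case by simp
next
  case (Cons s v1)
  obtain s2 v2' where v2: "v2 = s2 # v2'" using Cons.prems(1) by (cases v2) auto
  have pv: "shape_letter s = shape_letter s2" "map shape_letter v1 = map shape_letter v2'"
    using Cons.prems(1) v2 by auto
  have ok: "canonical v1" "canonical v2'" using Cons.prems(5,6) v2 by (auto simp: canonical_def)
  show ?case
  proof (cases s)
    case (LB b)
    then obtain b' where b': "s2 = LB b'" using pv(1) by (cases s2) (auto simp: shape_letter_def)
    have bb: "b = bzero" "b' = bzero" using Cons.prems(5,6) LB b' v2 by (auto simp: canonical_def)
    have l: "rot_sum v1 mod 3 = rot_sum v2' mod 3" "gen_offsets v1 = gen_offsets v2'"
      using Cons.prems(2) LB b' v2 by auto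
    have "free_rot_values True v1 = free_rot_values True v2'" using Cons.prems(3) LB b' v2 by simp
    then have "v1 = v2'" using Cons.IH[OF pv(2) l(2) _ _ ok] l(1) by blast
    then show ?thesis using LB b' bb v2 by simp
  next
    case (LA a)
    then obtain a' where a': "s2 = LA a'" using pv(1) by (cases s2) (auto simp: shape_letter_def)
    have aa: "a < 3" "a' < 3" using Cons.prems(5,6) LA a' v2 by (auto simp: canonical_def)
    have lb: "gen_offsets v1 = gen_offsets v2'" using Cons.prems(2) LA a' v2 by auto
    have hd: "starts_gen v2' = starts_gen v1" using pv(2) starts_gen_shape by metis
    have "a = a' \<and> free_rot_values False v1 = free_rot_values False v2'"
    proof (cases "after_gen \<and> starts_gen v1")
      case True
      then obtain c v0 where v1: "v1 = LB c # v0" by (cases v1 rule: starts_gen.cases) auto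
      obtain c' v0' where v2': "v2' = LB c' # v0'"
        using True hd by (cases v2' rule: starts_gen.cases) auto
      have "rot_sum v0 mod 3 = rot_sum v0' mod 3" using lb v1 v2' by simp
      moreover have "(a + rot_sum v0) mod 3 = (a' + rot_sum v0') mod 3"
        using Cons.prems(4) True LA a' v2 v1 v2' by simp
      ultimately have "a = a'" using mod3_add_cancel aa by blast
      moreover have "free_rot_values False v1 = free_rot_values False v2'"
        using Cons.prems(3) True hd LA a' v2 by simp
      ultimately show ?thesis by simp
    next
      case False
      then show ?thesis using Cons.prems(3) hd LA a' v2 by auto
    qed
    then have "a = a'" "v1 = v2'" using Cons.IH[OF pv(2) lb _ _ ok] by auto
    then show ?thesis using LA a' v2 by simp
  qed
qed

definition root_data :: "letter list \<Rightarrow> letter list set" where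
  "root_data P = {r. map shape_letter r = P \<and> canonical r \<and> is_walk (gen_offsets r)}"

lemma free_rot_values_less3: "canonical r \<Longrightarrow> set (free_rot_values after_gen r) \<subseteq> {..<3}"
proof (induction after_gen r rule: free_rot_values.induct)
  case (2 after_gen b r) then show ?case by (simp add: canonical_def)
next
  case (3 after_gen a r) then show ?case by (auto simp: canonical_def)
qed simp

lemma card_root_data:
  assumes "free_rots False P \<le> 4" "length (gen_offsets P) \<le> n"
  shows "finite (root_data P) \<and> card (root_data P) \<le> 243 * (n + 1)"
proof -
  define f where "f r = (gen_offsets r, free_rot_values False r)" for r
  define M where "M = length (gen_offsets P)"
  define W where "W = {T. is_walk T \<and> length T = M}"
  define V where "V = {xs. set xs \<subseteq> {..<3::nat} \<and> length xs = free_rots False P}"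
  have inj: "inj_on f (root_data P)"
  proof (rule inj_onI)
    fix r1 r2 assume "r1 \<in> root_data P" "r2 \<in> root_data P" "f r1 = f r2"
    then show "r1 = r2"
      unfolding root_data_def f_def by (intro canonical_inj[of r1 r2 False]) auto
  qed
  have img: "f ` root_data P \<subseteq> W \<times> V"
  proof
    fix y assume "y \<in> f ` root_data P"
    then obtain r where r: "r \<in> root_data P" "y = f r" by blast
    have "length (gen_offsets r) = M"
      using r(1) length_gen_offsets_shape[of r] unfolding root_data_def M_def by auto
    then have "gen_offsets r \<in> W" using r(1) unfolding W_def root_data_def by auto
    moreover have "free_rot_values False r \<in> V"
      using r(1) free_rot_values_less3[of r False] length_free_rot_values[of False r]
        free_rots_shape[of False r]
      unfolding V_def root_data_def by auto
    ultimately show "y \<in> W \<times> V" using r(2) unfolding f_def by auto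
  qed
  have fW: "finite W" "card W \<le> 3 * (M + 1)" using card_walks[of M] unfolding W_def by auto
  have fV: "finite V" "card V = 3 ^ free_rots False P" unfolding V_def
    using finite_lists_length_eq[of "{..<3::nat}"] card_lists_length_eq[of "{..<3::nat}"] by auto
  have "card V \<le> 3 ^ 4" unfolding fV(2) using assms(1) by (intro power_increasing) auto
  then have cV: "card V \<le> 81" by simp
  have fWV: "finite (W \<times> V)" using fW fV by simp
  have "finite (f ` root_data P)" using finite_subset[OF img fWV] .
  then have fin: "finite (root_data P)" using finite_imageD[OF _ inj] by blast
  have "card (root_data P) = card (f ` root_data P)" using card_image[OF inj] by simp
  also have "\<dots> \<le> card (W \<times> V)" by (rule card_mono[OF fWV img])
  also have "\<dots> = card W * card V" by (simp add: card_cartesian_product)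
  also have "\<dots> \<le> (3 * (M + 1)) * 81" by (intro mult_mono fW(2) cV) auto
  also have "\<dots> \<le> 243 * (n + 1)" using assms(2) unfolding M_def by simp
  finally show ?thesis using fin by simp
qed

text \<open>A data tree of depth \<open>L\<close> records, at every vertex of the first \<open>L + 1\<close> levels, the section
  of a word there with its generators erased; \<open>data_trees L P\<close> bounds the trees possible for
  words of shape \<open>P\<close>.\<close>

datatype data_tree = Node "letter list" "data_tree list"

fun data_trees :: "nat \<Rightarrow> letter list \<Rightarrow> data_tree set" where
  "data_trees 0 P = (\<lambda>r. Node r []) ` root_data P"
| "data_trees (Suc L) P = (\<lambda>(r, t0, t1, t2). Node r [t0, t1, t2]) `
     (SIGMA r:root_data P. data_trees L (section_shape r 0) \<times> data_trees L (section_shape r 1)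
        \<times> data_trees L (section_shape r 2))"

fun tree_nodes :: "nat \<Rightarrow> nat" where
  "tree_nodes 0 = 1"
| "tree_nodes (Suc L) = 1 + 3 * tree_nodes L"

lemma tree_nodes_eq: "2 * tree_nodes L + 1 = 3 ^ (L + 1)"
  by (induction L) auto

lemma child_shape_bounds:
  assumes "r \<in> root_data P" "length (gen_offsets P) \<le> n" "x < 3"
  shows "free_rots False (section_shape r x) \<le> 4" "length (gen_offsets (section_shape r x)) \<le> n"
proof -
  have r: "map shape_letter r = P" "is_walk (gen_offsets r)"
    using assms(1) unfolding root_data_def by auto
  show "free_rots False (section_shape r x) \<le> 4" using free_rots_section_shape[OF r(2) assms(3)] .
  have "length (gen_offsets (section_shape r x)) \<le> length (gen_offsets r)"
    by (rule length_gen_offsets_section_shape)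
  also have "\<dots> = length (gen_offsets P)" using length_gen_offsets_shape[of r] r(1) by simp
  finally show "length (gen_offsets (section_shape r x)) \<le> n" using assms(2) by simp
qed

lemma card_data_trees:
  "free_rots False P \<le> 4 \<Longrightarrow> length (gen_offsets P) \<le> n \<Longrightarrow>
   finite (data_trees L P) \<and> card (data_trees L P) \<le> (243 * (n + 1)) ^ tree_nodes L"
proof (induction L arbitrary: P)
  case 0
  have F: "finite (root_data P) \<and> card (root_data P) \<le> 243 * (n + 1)" using card_root_data[OF 0] .
  then have "card (data_trees 0 P) \<le> 243 * (n + 1)"
    using card_image_le[of "root_data P" "\<lambda>r. Node r []"] by simp
  then show ?case using F by simp
next
  case (Suc L)
  define B where "B = 243 * (n + 1)"
  define N where "N = tree_nodes L"
  define D where "D r = data_trees L (section_shape r 0) \<times> data_trees L (section_shape r 1)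
    \<times> data_trees L (section_shape r 2)" for r
  have F: "finite (root_data P)" "card (root_data P) \<le> B"
    using card_root_data[OF Suc.prems] unfolding B_def by auto
  have ch: "finite (data_trees L (section_shape r x))
      \<and> card (data_trees L (section_shape r x)) \<le> B ^ N"
    if "r \<in> root_data P" "x < 3" for r x
    using Suc.IH[OF child_shape_bounds[OF that(1) Suc.prems(2) that(2)]]
    unfolding B_def N_def by simp
  have D: "finite (D r)" "card (D r) \<le> B ^ N * (B ^ N * B ^ N)" if "r \<in> root_data P" for r
    unfolding D_def card_cartesian_product
    using ch[OF that, of 0] ch[OF that, of 1] ch[OF that, of 2] by (auto intro!: mult_mono)
  have "card (SIGMA r:root_data P. D r) = (\<Sum>r\<in>root_data P. card (D r))"
    using F(1) D(1) by (intro card_SigmaI) auto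
  also have "\<dots> \<le> (\<Sum>r\<in>root_data P. B ^ N * (B ^ N * B ^ N))" by (intro sum_mono D(2))
  also have "\<dots> = card (root_data P) * (B ^ N * (B ^ N * B ^ N))" by simp
  also have "\<dots> \<le> B * (B ^ N * (B ^ N * B ^ N))" by (intro mult_right_mono F(2)) simp
  also have "\<dots> = B ^ tree_nodes (Suc L)"
    unfolding N_def by (simp add: power_add[symmetric] numeral_3_eq_3)
  finally have card_S: "card (SIGMA r:root_data P. D r) \<le> B ^ tree_nodes (Suc L)" .
  have fin_S: "finite (SIGMA r:root_data P. D r)" by (rule finite_SigmaI[OF F(1) D(1)])
  have T: "data_trees (Suc L) P
      = (\<lambda>(r, t0, t1, t2). Node r [t0, t1, t2]) ` (SIGMA r:root_data P. D r)"
    unfolding D_def by simp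
  have "card (data_trees (Suc L) P) \<le> card (SIGMA r:root_data P. D r)"
    unfolding T by (rule card_image_le[OF fin_S])
  then show ?case using fin_S card_S unfolding T B_def by simp
qed

section \<open>Profiles of words\<close>

text \<open>\<open>profile \<omega> k\<close> replaces a generator \<open>b\<close> by the exponents of \<open>\<omega>\<^sub>0(b), \<dots>, \<omega>\<^sub>k\<^sub>-\<^sub>1(b)\<close>;
  the data tree of depth \<open>k\<close> of a word determines its profile of level \<open>k\<close>, and for \<open>k = l + 1\<close>
  the profile determines the word.\<close>

definition profile :: "epi_seq \<Rightarrow> nat \<Rightarrow> letter \<Rightarrow> letter" where
  "profile \<omega> k l
     = (case l of LA a \<Rightarrow> LA a | LB b \<Rightarrow> LB (\<lambda>j. if j < k then rot_index (\<omega> j) b else 0))"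

lemma profile_simps[simp]:
  "profile \<omega> k (LA a) = LA a"
  "profile \<omega> k (LB b) = LB (\<lambda>j. if j < k then rot_index (\<omega> j) b else 0)"
  by (simp_all add: profile_def)

lemma rot_sum_profile: "rot_sum (map (profile \<omega> k) w) = rot_sum w"
proof (induction w)
  case (Cons s w) then show ?case by (cases s) auto
qed simp

lemma profile_letter_Suc:
  assumes "profile \<omega> 0 s1 = profile \<omega> 0 s2"
    "\<forall>y<3. map (profile (shift \<omega>) k) (letter_section \<omega> s1 y)
       = map (profile (shift \<omega>) k) (letter_section \<omega> s2 y)"
  shows "profile \<omega> (Suc k) s1 = profile \<omega> (Suc k) s2"
proof (cases s1)
  case (LA a) then show ?thesis using assms(1) by (cases s2) auto
next
  case (LB b)
  then obtain b' where b': "s2 = LB b'" using assms(1) by (cases s2) auto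
  have h0: "rot_index (\<omega> 0) b = rot_index (\<omega> 0) b'"
    using assms(2)[rule_format, of "0::nat"] LB b' by simp
  have "(\<lambda>j. if j < k then rot_index (shift \<omega> j) b else 0)
      = (\<lambda>j. if j < k then rot_index (shift \<omega> j) b' else 0)"
    using assms(2)[rule_format, of "2::nat"] LB b' by simp
  then have hs: "\<And>j. j < k \<Longrightarrow> rot_index (\<omega> (Suc j)) b = rot_index (\<omega> (Suc j)) b'"
    by (metis shift_app)
  have "(\<lambda>j. if j < Suc k then rot_index (\<omega> j) b else 0)
      = (\<lambda>j. if j < Suc k then rot_index (\<omega> j) b' else 0)"
  proof
    fix j
    show "(if j < Suc k then rot_index (\<omega> j) b else 0) = (if j < Suc k then rot_index (\<omega> j) b' else 0)"
      using h0 hs by (cases j) auto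
  qed
  then show ?thesis using LB b' by simp
qed

lemma profile_Suc:
  assumes "map (profile \<omega> 0) w1 = map (profile \<omega> 0) w2"
    "\<forall>x<3. map (profile (shift \<omega>) k) (word_section \<omega> w1 x)
       = map (profile (shift \<omega>) k) (word_section \<omega> w2 x)"
  shows "map (profile \<omega> (Suc k)) w1 = map (profile \<omega> (Suc k)) w2"
  using assms
proof (induction w1 arbitrary: w2)
  case Nil then show ?case by simp
next
  case (Cons s1 w1)
  obtain s2 w2' where w2: "w2 = s2 # w2'" using Cons.prems(1) by (cases w2) auto
  have p0: "profile \<omega> 0 s1 = profile \<omega> 0 s2" "map (profile \<omega> 0) w1 = map (profile \<omega> 0) w2'"
    using Cons.prems(1) w2 by auto
  have tt: "rot_sum w1 = rot_sum w2'" by (metis rot_sum_profile p0(2))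
  have len: "\<And>y. length (letter_section \<omega> s1 y) = length (letter_section \<omega> s2 y)"
    using p0(1) by (cases s1; cases s2) auto
  let ?pr = "map (profile (shift \<omega>) k)"
  have split: "?pr (letter_section \<omega> s1 ((x + rot_sum w1) mod 3))
        = ?pr (letter_section \<omega> s2 ((x + rot_sum w1) mod 3))
      \<and> ?pr (word_section \<omega> w1 x) = ?pr (word_section \<omega> w2' x)" if x: "x < 3" for x
  proof -
    have "?pr (letter_section \<omega> s1 ((x + rot_sum w1) mod 3)) @ ?pr (word_section \<omega> w1 x)
        = ?pr (letter_section \<omega> s2 ((x + rot_sum w1) mod 3)) @ ?pr (word_section \<omega> w2' x)"
      using Cons.prems(2)[rule_format, OF x] w2 tt by simp
    then show ?thesis using len by (subst (asm) append_eq_append_conv) auto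
  qed
  have "map (profile \<omega> (Suc k)) w1 = map (profile \<omega> (Suc k)) w2'"
    using Cons.IH[OF p0(2)] split by blast
  moreover have "profile \<omega> (Suc k) s1 = profile \<omega> (Suc k) s2"
  proof (rule profile_letter_Suc[OF p0(1)], intro allI impI)
    fix y :: nat assume "y < 3"
    then obtain x where "x < 3" "(x + rot_sum w1) mod 3 = y" using mod3_shift_surj by blast
    then show "?pr (letter_section \<omega> s1 y) = ?pr (letter_section \<omega> s2 y)"
      using split by blast
  qed
  ultimately show ?case using w2 by simp
qed

lemma gen_offsets_profile: "gen_offsets (map (profile \<omega> k) w) = gen_offsets w"
proof (induction w)
  case (Cons s w) then show ?case by (cases s) (auto simp: rot_sum_profile)
qed simp

lemma section_shape_profile: "section_shape (map (profile \<omega> k) w) x = section_shape w x"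
  by (simp add: section_shape_def gen_offsets_profile)

lemma shape_profile: "map shape_letter (map (profile \<omega> k) w) = map shape_letter w"
proof (induction w)
  case (Cons s w) then show ?case by (cases s) auto
qed simp

lemma canonical_profile: "wf_word m w \<Longrightarrow> canonical (map (profile \<omega> 0) w)"
proof (induction w)
  case Nil then show ?case by (simp add: canonical_def)
next
  case (Cons s w)
  have "wf_word m w" using Cons.prems by (simp add: wf_word_def)
  then have "canonical (map (profile \<omega> 0) w)" using Cons.IH by simp
  moreover have "case profile \<omega> 0 s of LA a \<Rightarrow> a < 3 | LB b \<Rightarrow> b = bzero"
    using Cons.prems by (cases s) (auto simp: wf_word_def bzero_def)
  ultimately show ?case by (simp add: canonical_def)
qed

lemma profile_in_root_data:
  assumes "hered_reduced \<omega> (Suc L) w" "wf_word m w"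
  shows "map (profile \<omega> 0) w \<in> root_data (map shape_letter w)"
proof -
  have "reduced w" "\<forall>x<3. reduced (word_section \<omega> w x)"
    using assms(1) hered_reduced_reduced by auto
  then have "is_walk (gen_offsets w)" by (rule gen_offsets_walk)
  then show ?thesis
    unfolding root_data_def using shape_profile canonical_profile[OF assms(2)] gen_offsets_profile
    by auto
qed

fun data_of :: "epi_seq \<Rightarrow> nat \<Rightarrow> letter list \<Rightarrow> data_tree" where
  "data_of \<omega> 0 w = Node (map (profile \<omega> 0) w) []"
| "data_of \<omega> (Suc L) w
     = Node (map (profile \<omega> 0) w) (map (\<lambda>x. data_of (shift \<omega>) L (word_section \<omega> w x)) [0, 1, 2])"

lemma data_of_profile:
  "data_of \<omega> L w1 = data_of \<omega> L w2 \<Longrightarrow> map (profile \<omega> L) w1 = map (profile \<omega> L) w2"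
proof (induction L arbitrary: \<omega> w1 w2)
  case 0 then show ?case by simp
next
  case (Suc L)
  have p0: "map (profile \<omega> 0) w1 = map (profile \<omega> 0) w2" using Suc.prems by simp
  have "\<forall>x<3. map (profile (shift \<omega>) L) (word_section \<omega> w1 x)
      = map (profile (shift \<omega>) L) (word_section \<omega> w2 x)"
  proof (intro allI impI)
    fix x :: nat assume x: "x < 3"
    have "data_of (shift \<omega>) L (word_section \<omega> w1 x) = data_of (shift \<omega>) L (word_section \<omega> w2 x)"
      using Suc.prems x by (drule_tac less3_cases) (elim disjE; simp)
    then show "map (profile (shift \<omega>) L) (word_section \<omega> w1 x)
        = map (profile (shift \<omega>) L) (word_section \<omega> w2 x)"
      by (rule Suc.IH)
  qed
  then show ?case using profile_Suc[OF p0] by blast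
qed

lemma data_of_in_data_trees:
  "hered_reduced \<omega> (Suc L) w \<Longrightarrow> wf_word m w \<Longrightarrow> \<forall>i. epi m (\<omega> i)
    \<Longrightarrow> data_of \<omega> L w \<in> data_trees L (map shape_letter w)"
proof (induction L arbitrary: \<omega> w)
  case 0 then show ?case using profile_in_root_data[OF 0(1,2)] by simp
next
  case (Suc L)
  have root: "map (profile \<omega> 0) w \<in> root_data (map shape_letter w)"
    using profile_in_root_data[OF Suc.prems(1,2)] .
  have ch: "data_of (shift \<omega>) L (word_section \<omega> w x)
      \<in> data_trees L (section_shape (map (profile \<omega> 0) w) x)" if x: "x < 3" for x
  proof -
    have "hered_reduced (shift \<omega>) (Suc L) (word_section \<omega> w x)" using Suc.prems(1) x by simp
    from Suc.IH[OF this wf_word_section[OF Suc.prems(3,2)] epis_shift[OF Suc.prems(3)]]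
    show ?thesis by (simp add: shape_word_section section_shape_profile)
  qed
  then show ?case using root by (auto simp: image_iff)
qed

lemma profile_letter_inj:
  assumes epis: "\<forall>i. epi m (\<omega> i)" and lk: "(\<Inter>i\<in>{0..l}. kern m (\<omega> i)) = {bzero}"
  shows "inj_on (profile \<omega> (Suc l)) {s. wf_letter m s}"
proof (rule inj_onI)
  fix s s2 assume wf: "s \<in> {s. wf_letter m s}" "s2 \<in> {s. wf_letter m s}"
    and p: "profile \<omega> (Suc l) s = profile \<omega> (Suc l) s2"
  show "s = s2"
  proof (cases s)
    case (LA a) then show ?thesis using p by (cases s2) auto
  next
    case (LB b)
    then obtain b' where b': "s2 = LB b'" using p by (cases s2) auto
    have bb: "b \<in> B_set m" "b' \<in> B_set m" using wf LB b' by auto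
    have fe: "(\<lambda>j. if j < Suc l then rot_index (\<omega> j) b else 0)
        = (\<lambda>j. if j < Suc l then rot_index (\<omega> j) b' else 0)"
      using p LB b' by simp
    have "\<forall>j\<le>l. \<omega> j b = \<omega> j b'"
    proof (intro allI impI)
      fix j assume "j \<le> l"
      then have "rot_index (\<omega> j) b = rot_index (\<omega> j) b'" using fun_cong[OF fe, of j] by simp
      then show "\<omega> j b = \<omega> j b'"
        using rot_index(2)[OF _ bb(1)] rot_index(2)[OF _ bb(2)] epis by metis
    qed
    then show ?thesis using gen_eq_if_images_eq[OF epis lk bb] LB b' by simp
  qed
qed

lemma profile_inj:
  assumes "\<forall>i. epi m (\<omega> i)" "(\<Inter>i\<in>{0..l}. kern m (\<omega> i)) = {bzero}"
    and "wf_word m w1" "wf_word m w2" "map (profile \<omega> (Suc l)) w1 = map (profile \<omega> (Suc l)) w2"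
  shows "w1 = w2"
proof (rule map_inj_on[OF assms(5)])
  show "inj_on (profile \<omega> (Suc l)) (set w1 \<union> set w2)"
    using assms(3,4) unfolding wf_word_def
    by (intro inj_on_subset[OF profile_letter_inj[OF assms(1,2)]]) auto
qed

section \<open>Counting incompressible elements\<close>

lemma faithful_if_kern_trivial:
  assumes "(\<Inter>i\<in>{0..}. kern m (\<omega> i)) = {bzero}"
  shows "faithful m \<omega>"
  using assms unfolding faithful_def kern_def by blast

lemma Inc_inf_n_word:
  assumes epis: "\<forall>i. epi m (\<omega> i)" and faithful: "faithful m \<omega>"
    and g: "g \<in> Inc_inf_n m \<omega> n"
  shows "\<exists>w. wf_word m w \<and> eval_word \<omega> w = g \<and> map shape_letter w = alternating (LA 0) (2 * n + 1)
           \<and> (\<forall>k. hered_reduced \<omega> k w)"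
proof -
  have inc: "g \<in> Inc m k \<omega>" for k
  proof (cases k)
    case 0
    have "g \<in> Inc m (Suc 0) \<omega>"
      using g unfolding Inc_inf_n_def Inc_inf_def by (auto simp del: Inc.simps)
    then show ?thesis using 0 by simp
  qed (use g in \<open>auto simp: Inc_inf_n_def Inc_inf_def simp del: Inc.simps\<close>)
  have "g \<in> G_om m \<omega>" using inc[of 0] by simp
  then obtain w0 where w0: "wf_word m w0" "eval_word \<omega> w0 = g" "word_weight w0 = wlen m \<omega> g"
    using minimal_word_exists[OF epis faithful] by blast
  define w where "w = normalize w0"
  have w: "wf_word m w" "nontrivial w" "eval_word \<omega> w = g" "word_weight w = wlen m \<omega> g"
    unfolding w_def
    using wf_word_normalize[OF w0(1)] nontrivial_normalize eval_word_normalize[OF epis]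
      word_weight_normalize w0 by simp_all
  have "wlen m \<omega> g = n" using g unfolding Inc_inf_n_def by simp
  then have "map shape_letter w = alternating (LA 0) (2 * n + 1)"
    unfolding w_def using shape_normalize w0(3) by simp
  moreover have "hered_reduced \<omega> k w" for k
    using Inc_hered_reduced[OF epis w(1,2)] w(3,4) inc by simp
  ultimately show ?thesis using w by blast
qed

lemma Inc_inf_n_embeds_data_trees:
  assumes epis: "\<forall>i. epi m (\<omega> i)" and faithful: "faithful m \<omega>"
    and l_ker: "(\<Inter>i\<in>{0..l}. kern m (\<omega> i)) = {bzero}"
  shows "\<exists>\<Phi>. inj_on \<Phi> (Inc_inf_n m \<omega> n)
    \<and> \<Phi> ` Inc_inf_n m \<omega> n \<subseteq> data_trees (Suc l) (alternating (LA 0) (2 * n + 1))"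
proof -
  define S where "S = Inc_inf_n m \<omega> n"
  define P where "P = alternating (LA 0) (2 * n + 1)"
  define good where "good g w \<longleftrightarrow> wf_word m w \<and> eval_word \<omega> w = g \<and> map shape_letter w = P
    \<and> hered_reduced \<omega> (Suc (Suc l)) w" for g w
  define W where "W g = (SOME w. good g w)" for g
  have W: "wf_word m (W g)" "eval_word \<omega> (W g) = g" "map shape_letter (W g) = P"
    "hered_reduced \<omega> (Suc (Suc l)) (W g)" if g: "g \<in> S" for g
  proof -
    obtain w where "wf_word m w" "eval_word \<omega> w = g" "map shape_letter w = P"
      "\<forall>k. hered_reduced \<omega> k w"
      using Inc_inf_n_word[OF epis faithful g[unfolded S_def]] unfolding P_def by blast
    then have "good g w" unfolding good_def by (simp del: hered_reduced.simps)
    then have "good g (W g)" unfolding W_def by (rule someI)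
    then show "wf_word m (W g)" "eval_word \<omega> (W g) = g" "map shape_letter (W g) = P"
      "hered_reduced \<omega> (Suc (Suc l)) (W g)"
      unfolding good_def by (simp_all del: hered_reduced.simps)
  qed
  define \<Phi> where "\<Phi> g = data_of \<omega> (Suc l) (W g)" for g
  have "\<Phi> ` S \<subseteq> data_trees (Suc l) P"
  proof
    fix T assume "T \<in> \<Phi> ` S"
    then obtain g where g: "g \<in> S" "T = \<Phi> g" by blast
    have "data_of \<omega> (Suc l) (W g) \<in> data_trees (Suc l) (map shape_letter (W g))"
      by (rule data_of_in_data_trees[OF W(4)[OF g(1)] W(1)[OF g(1)] epis])
    then show "T \<in> data_trees (Suc l) P"
      unfolding g(2) \<Phi>_def W(3)[OF g(1)] .
  qed
  moreover have "inj_on \<Phi> S"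
  proof (rule inj_onI)
    fix g1 g2 assume g: "g1 \<in> S" "g2 \<in> S" "\<Phi> g1 = \<Phi> g2"
    have "map (profile \<omega> (Suc l)) (W g1) = map (profile \<omega> (Suc l)) (W g2)"
      using g(3) unfolding \<Phi>_def by (rule data_of_profile)
    then have "W g1 = W g2"
      by (rule profile_inj[OF epis l_ker W(1)[OF g(1)] W(1)[OF g(2)]])
    then show "g1 = g2"
      using W(2)[OF g(1)] W(2)[OF g(2)] by metis
  qed
  ultimately show ?thesis unfolding S_def P_def by blast
qed

lemma card_Inc_inf_n:
  assumes "\<forall>i. epi m (\<omega> i)" "faithful m \<omega>" "(\<Inter>i\<in>{0..l}. kern m (\<omega> i)) = {bzero}"
  shows "finite (Inc_inf_n m \<omega> n) \<and> card (Inc_inf_n m \<omega> n) \<le> (243 * (n + 1)) ^ tree_nodes (Suc l)"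
proof -
  define P where "P = alternating (LA 0) (2 * n + 1)"
  obtain \<Phi> where inj: "inj_on \<Phi> (Inc_inf_n m \<omega> n)"
    and img: "\<Phi> ` Inc_inf_n m \<omega> n \<subseteq> data_trees (Suc l) P"
    using Inc_inf_n_embeds_data_trees[OF assms] unfolding P_def by blast
  have "finite (data_trees (Suc l) P)
      \<and> card (data_trees (Suc l) P) \<le> (243 * (n + 1)) ^ tree_nodes (Suc l)"
    unfolding P_def
    by (rule card_data_trees[OF free_rots_alternating_root])
      (unfold length_gen_offsets_alternating, rule order_refl)
  then have T: "finite (data_trees (Suc l) P)"
    "card (data_trees (Suc l) P) \<le> (243 * (n + 1)) ^ tree_nodes (Suc l)"
    by auto
  have "finite (Inc_inf_n m \<omega> n)" using finite_imageD[OF finite_subset[OF img T(1)] inj] .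
  moreover have "card (Inc_inf_n m \<omega> n) \<le> card (data_trees (Suc l) P)"
    using card_inj_on_le[OF inj img T(1)] .
  ultimately show ?thesis using T(2) by simp
qed

theorem mainTheorem2:
  fixes m l :: nat and \<omega> :: "nat \<Rightarrow> (nat \<Rightarrow> nat) \<Rightarrow> (nat \<Rightarrow> nat)"
  assumes epis: "\<forall>i. epi m (\<omega> i)"
    and ker_tail: "\<forall>k. (\<Inter>i\<in>{k..}. kern m (\<omega> i)) = {bzero}"
    and l_ker: "(\<Inter>i\<in>{0..l}. kern m (\<omega> i)) = {bzero}"
    and l_least: "\<forall>l'<l. (\<Inter>i\<in>{0..l'}. kern m (\<omega> i)) \<noteq> {bzero}"
  shows "\<exists>C::nat. \<forall>n::nat. n \<ge> 1 \<longrightarrow>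
           finite (Inc_inf_n m \<omega> n) \<and>
           card (Inc_inf_n m \<omega> n) \<le> C * n ^ ((3 ^ (l + 2) - 1) div 2)"
proof -
  define d :: nat where "d = (3 ^ (l + 2) - 1) div 2"
  have d: "tree_nodes (Suc l) = d" using tree_nodes_eq[of "Suc l"] unfolding d_def by simp
  have faithful: "faithful m \<omega>"
    using faithful_if_kern_trivial ker_tail by blast
  show ?thesis
  proof (intro exI[of _ "486 ^ d"] allI impI conjI)
    fix n :: nat assume n: "n \<ge> 1"
    show "finite (Inc_inf_n m \<omega> n)"
      using card_Inc_inf_n[OF epis faithful l_ker] by blast
    have "card (Inc_inf_n m \<omega> n) \<le> (243 * (n + 1)) ^ d"
      using card_Inc_inf_n[OF epis faithful l_ker] unfolding d by blast
    also have "\<dots> \<le> (486 * n) ^ d" using n by (intro power_mono) auto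
    also have "\<dots> = 486 ^ d * n ^ ((3 ^ (l + 2) - 1) div 2)"
      unfolding d_def by (simp add: power_mult_distrib)
    finally show "card (Inc_inf_n m \<omega> n) \<le> 486 ^ d * n ^ ((3 ^ (l + 2) - 1) div 2)" .
  qed
qed

end
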